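(* Let $n\ge 1$, $d\ge 0$, $s\ge 1$ and $m_1,\dots,m_s\ge 0$ be integers, and let ${\mathcal L}={\mathcal L}_{n,d}(m_1,\dots,m_s)$. Then ${\mathcal L}$ is non-empty if $$m_i\le d\ \text{ for all } i \quad\text{and}\quad \sum_{i=1}^s m_i\le nd. \qquad (\ast)$$ Moreover, if $s\le n+2$, then ${\mathcal L}$ is non-empty if and only if the conditions $(\ast)$ are satisfied. In particular, the faces of the effective cone of the blow-up of ${\mathbb P}^n$ at $s$ general points (a divisor class being written $dH-\sum_i m_iE_i$) are given by $\{d=m_1\},\dots,\{d=m_s\}$ if $s\le n$, and by $\{d=m_1\},\dots,\{d=m_s\},\{nd=\sum_{i=1}^s m_i\}$ if $s=n+1$ or $s=n+2$.
   Context: ${\mathcal L}_{n,d}(m_1,\dots,m_s)$ denotes the linear system of hypersurfaces of degree $d$ in complex projective space ${\mathbb P}^n$ having multiplicity at least $m_i$ at $p_i$, where $p_1,\dots,p_s$ are general points. It is non-empty if it contains at least one hypersurface. On the blow-up of ${\mathbb P}^n$ at $p_1,\dots,p_s$, $H$ denotes the pull-back of a hyperplane class and $E_i$ the exceptional divisor over $p_i$. *)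

theory Defs
  imports Complex_Main
begin

text \<open>Homogeneous polynomials of degree d in the n+1 variables x_0..x_n over the complex
numbers, represented by their coefficient function on exponent vectors (nat => nat).\<close>

definition monomials_of :: "nat \<Rightarrow> nat \<Rightarrow> (nat \<Rightarrow> nat) set" where
  "monomials_of n d = {\<alpha>. (\<forall>j>n. \<alpha> j = 0) \<and> (\<Sum>j\<le>n. \<alpha> j) = d}"

definition homog_form :: "nat \<Rightarrow> nat \<Rightarrow> ((nat \<Rightarrow> nat) \<Rightarrow> complex) \<Rightarrow> bool" where
  "homog_form n d c \<longleftrightarrow> (\<forall>\<alpha>. c \<alpha> \<noteq> 0 \<longrightarrow> \<alpha> \<in> monomials_of n d)"

text \<open>Value at the point x of the partial derivative d^beta F of the form F with coefficients c.\<close>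

definition deriv_eval ::
  "nat \<Rightarrow> nat \<Rightarrow> ((nat \<Rightarrow> nat) \<Rightarrow> complex) \<Rightarrow> (nat \<Rightarrow> nat) \<Rightarrow> (nat \<Rightarrow> complex) \<Rightarrow> complex" where
  "deriv_eval n d c \<beta> x =
     (\<Sum>\<alpha>\<in>monomials_of n d. c \<alpha> *
        (\<Prod>j\<le>n. (if \<beta> j \<le> \<alpha> j
                   then of_nat (fact (\<alpha> j) div fact (\<alpha> j - \<beta> j)) * x j ^ (\<alpha> j - \<beta> j)
                   else 0)))"

definition mult_ge ::
  "nat \<Rightarrow> nat \<Rightarrow> ((nat \<Rightarrow> nat) \<Rightarrow> complex) \<Rightarrow> (nat \<Rightarrow> complex) \<Rightarrow> nat \<Rightarrow> bool" where
  "mult_ge n d c p m \<longleftrightarrow>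
     (\<forall>\<beta>. (\<forall>j>n. \<beta> j = 0) \<longrightarrow> (\<Sum>j\<le>n. \<beta> j) < m \<longrightarrow> deriv_eval n d c \<beta> p = 0)"

text \<open>Configurations of s points of P^n: p i j is the j-th homogeneous coordinate of the
i-th point. A polynomial G in the variables (i,j), i<s, j<=n, is again given by its
coefficients on exponent vectors gamma :: nat => nat => nat.\<close>

definition geval :: "nat \<Rightarrow> nat \<Rightarrow> ((nat \<Rightarrow> nat \<Rightarrow> nat) \<Rightarrow> complex) \<Rightarrow> (nat \<Rightarrow> nat \<Rightarrow> complex) \<Rightarrow> complex" where
  "geval n s G p = (\<Sum>\<gamma>\<in>{\<gamma>. G \<gamma> \<noteq> 0}. G \<gamma> * (\<Prod>i<s. \<Prod>j\<le>n. p i j ^ \<gamma> i j))"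

definition valid_config :: "nat \<Rightarrow> nat \<Rightarrow> (nat \<Rightarrow> nat \<Rightarrow> complex) \<Rightarrow> bool" where
  "valid_config n s p \<longleftrightarrow> (\<forall>i<s. \<exists>j\<le>n. p i j \<noteq> 0)"

text \<open>A property holds for general points p_1..p_s of P^n: it holds on the nonempty Zariski
open set where some nonzero polynomial G in the coordinates of the points does not vanish.\<close>

definition for_general_points :: "nat \<Rightarrow> nat \<Rightarrow> ((nat \<Rightarrow> nat \<Rightarrow> complex) \<Rightarrow> bool) \<Rightarrow> bool" where
  "for_general_points n s P \<longleftrightarrow>
     (\<exists>G. finite {\<gamma>. G \<gamma> \<noteq> 0} \<and> {\<gamma>. G \<gamma> \<noteq> 0} \<noteq> {} \<and>
          (\<forall>\<gamma>. G \<gamma> \<noteq> 0 \<longrightarrow> (\<forall>i j. \<gamma> i j \<noteq> 0 \<longrightarrow> i < s \<and> j \<le> n)) \<and>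
          (\<forall>p. valid_config n s p \<longrightarrow> geval n s G p \<noteq> 0 \<longrightarrow> P p))"

text \<open>L_{n,d}(m_1,...,m_s) (indices shifted to 0..s-1) is non-empty: for general points it
contains a hypersurface, i.e. a nonzero form of degree d with the required multiplicities.\<close>

definition L_nonempty :: "nat \<Rightarrow> nat \<Rightarrow> nat \<Rightarrow> (nat \<Rightarrow> nat) \<Rightarrow> bool" where
  "L_nonempty n d s m \<longleftrightarrow>
     for_general_points n s (\<lambda>p. \<exists>c. homog_form n d c \<and> (\<exists>\<alpha>. c \<alpha> \<noteq> 0) \<and>
                                     (\<forall>i<s. mult_ge n d c (p i) (m i)))"

end

theory Submission
  imports Defs "Jordan_Normal_Form.Determinant" "HOL-Computational_Algebra.Polynomial"
begin

text \<open>
  Sufficiency: distribute the multiplicities cyclically over \<open>d\<close> hyperplanes so that each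
  hyperplane has to pass through at most \<open>n\<close> of the points; such hyperplanes exist for any
  points, and their product has degree \<open>d\<close> and multiplicity at least \<open>m\<^sub>i\<close> at \<open>p\<^sub>i\<close>.

  Necessity for \<open>s \<le> n + 2\<close>: a nonzero form of degree \<open>d\<close> has multiplicity at most \<open>d\<close>
  everywhere. For the sum, take general points \<open>p\<^sub>0, \<dots>, p\<^sub>n\<^sub>+\<^sub>1\<close> (padding with points of
  multiplicity 0). They lie on a rational normal curve \<open>\<gamma>\<close> of degree \<open>n\<close>, which can be chosen
  not to lie in the hypersurface \<open>F = 0\<close>. Then \<open>F \<circ> \<gamma>\<close> is a nonzero univariate polynomial of
  degree at most \<open>n d\<close> with a root of order at least \<open>m\<^sub>i\<close> at the parameter of \<open>p\<^sub>i\<close>, so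
  \<open>\<Sum> m\<^sub>i \<le> n d\<close>.
\<close>

section \<open>Derivatives of forms\<close>

definition pow_deriv :: "nat \<Rightarrow> nat \<Rightarrow> complex \<Rightarrow> complex" where
  "pow_deriv a b x = (if b \<le> a then of_nat (fact a div fact (a - b)) * x ^ (a - b) else 0)"

lemma deriv_eval_eq_pow_deriv:
  "deriv_eval n d c \<beta> x = (\<Sum>\<alpha>\<in>monomials_of n d. c \<alpha> * (\<Prod>j\<le>n. pow_deriv (\<alpha> j) (\<beta> j) (x j)))"
  unfolding deriv_eval_def pow_deriv_def by simp

lemma deriv_eval_0:
  "deriv_eval n d c (\<lambda>_. 0) x = (\<Sum>\<alpha>\<in>monomials_of n d. c \<alpha> * (\<Prod>j\<le>n. x j ^ \<alpha> j))"
  by (simp add: deriv_eval_eq_pow_deriv pow_deriv_def)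

lemma deriv_eval_cong:
  assumes "\<forall>j\<le>n. x j = y j"
  shows "deriv_eval n d c \<beta> x = deriv_eval n d c \<beta> y"
  unfolding deriv_eval_def using assms by (auto intro!: sum.cong prod.cong)

lemma of_nat_fact_div_fact:
  assumes "b \<le> a"
  shows "(of_nat (fact a div fact (a - b)) :: 'a::field_char_0) = fact a / fact (a - b)"
  using of_nat_of_nat_div[OF fact_dvd[of "a - b" a]] assms by simp

lemma pow_deriv_eq: "pow_deriv a b x = (if b \<le> a then fact a / fact (a - b) * x ^ (a - b) else 0)"
  by (simp add: pow_deriv_def of_nat_fact_div_fact)

lemma pow_deriv_self: "pow_deriv a a x = fact a"
  by (simp add: pow_deriv_def)

lemma pow_deriv_mult: "pow_deriv a b (k * x) = k ^ (a - b) * pow_deriv a b x"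
  by (simp add: pow_deriv_def power_mult_distrib)

lemma pow_deriv_Suc_Suc: "pow_deriv (Suc a) (Suc b) x = of_nat (Suc a) * pow_deriv a b x"
  by (simp add: pow_deriv_eq)

lemma pow_deriv_Suc:
  "pow_deriv (Suc a) b x = x * pow_deriv a b x + (if b = 0 then 0 else of_nat b * pow_deriv a (b - 1) x)"
proof (cases "b = 0 \<or> \<not> b \<le> a")
  case True
  then consider "b = 0" | "b = Suc a" | "Suc a < b" by linarith
  then show ?thesis by cases (simp_all add: pow_deriv_def algebra_simps)
next
  case False
  then obtain k where a: "a = k + b" and b: "b \<noteq> 0" by (metis le_add_diff_inverse2)
  have "(fact (Suc a) :: complex) / fact (Suc k) * x ^ Suc k =
        x * (fact a / fact k * x ^ k) + of_nat b * (fact a / fact (Suc k) * x ^ Suc k)"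
  proof -
    have "(fact (Suc a) :: complex) = (of_nat (Suc k) + of_nat b) * fact a"
      using a by (simp add: algebra_simps)
    moreover have "(fact (Suc k) :: complex) = of_nat (Suc k) * fact k" by simp
    moreover have "(of_nat (Suc k) :: complex) \<noteq> 0" by (simp only: of_nat_eq_0_iff)
    ultimately show ?thesis by (simp del: of_nat_Suc add: field_simps)
  qed
  moreover have "Suc a - b = Suc k" "a - (b - 1) = Suc k" "a - b = k" using a b by auto
  ultimately show ?thesis using a b by (simp add: pow_deriv_eq)
qed

lemma finite_monomials_of: "finite (monomials_of n d)"
proof -
  have "monomials_of n d \<subseteq> (\<lambda>f j. if j \<le> n then f j else 0) ` ({..n} \<rightarrow>\<^sub>E {..d})"
  proof
    fix \<alpha> assume "\<alpha> \<in> monomials_of n d"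
    then have zero: "\<forall>j>n. \<alpha> j = 0" and sum: "(\<Sum>j\<le>n. \<alpha> j) = d" by (auto simp: monomials_of_def)
    have "restrict \<alpha> {..n} \<in> {..n} \<rightarrow>\<^sub>E {..d}"
      using sum member_le_sum[of _ "{..n}" \<alpha>] by auto
    moreover have "\<alpha> = (\<lambda>j. if j \<le> n then restrict \<alpha> {..n} j else 0)"
      using zero by (auto simp: fun_eq_iff)
    ultimately show "\<alpha> \<in> (\<lambda>f j. if j \<le> n then f j else 0) ` ({..n} \<rightarrow>\<^sub>E {..d})" by blast
  qed
  then show ?thesis by (rule finite_subset) (simp add: finite_PiE)
qed

lemma monomials_of_0: "monomials_of n 0 = {\<lambda>_. 0}"
  by (auto simp: monomials_of_def fun_eq_iff not_le[symmetric])

lemma sum_fun_upd_Suc: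
  fixes \<alpha> :: "nat \<Rightarrow> nat"
  assumes "j \<le> n"
  shows "(\<Sum>k\<le>n. (\<alpha>(j := Suc (\<alpha> j))) k) = Suc (\<Sum>k\<le>n. \<alpha> k)"
proof -
  have "(\<Sum>k\<le>n. (\<alpha>(j := Suc (\<alpha> j))) k) = (\<Sum>k\<le>n. \<alpha> k + (if k = j then 1 else 0))"
    by (rule sum.cong) auto
  also have "\<dots> = Suc (\<Sum>k\<le>n. \<alpha> k)" using assms by (simp add: sum.distrib)
  finally show ?thesis .
qed

lemma sum_fun_upd_pred:
  fixes \<alpha> :: "nat \<Rightarrow> nat"
  assumes "j \<le> n" "\<alpha> j \<noteq> 0"
  shows "(\<Sum>k\<le>n. (\<alpha>(j := \<alpha> j - 1)) k) = (\<Sum>k\<le>n. \<alpha> k) - 1"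
proof -
  have "\<alpha> = (\<alpha>(j := \<alpha> j - 1))(j := Suc (\<alpha> j - 1))" using assms(2) by (simp add: fun_eq_iff)
  then have "(\<Sum>k\<le>n. \<alpha> k) = Suc (\<Sum>k\<le>n. (\<alpha>(j := \<alpha> j - 1)) k)"
    using sum_fun_upd_Suc[OF assms(1), of "\<alpha>(j := \<alpha> j - 1)"] by (metis fun_upd_same)
  then show ?thesis by simp
qed

lemma bij_betw_monomials_of_Suc:
  assumes "j \<le> n"
  shows "bij_betw (\<lambda>\<alpha>. \<alpha>(j := Suc (\<alpha> j))) (monomials_of n d)
           {\<alpha>\<in>monomials_of n (Suc d). \<alpha> j \<noteq> 0}"
proof (rule bij_betw_byWitness[where f' = "\<lambda>\<alpha>. \<alpha>(j := \<alpha> j - 1)"])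
  show "(\<lambda>\<alpha>. \<alpha>(j := Suc (\<alpha> j))) ` monomials_of n d \<subseteq> {\<alpha> \<in> monomials_of n (Suc d). \<alpha> j \<noteq> 0}"
    using assms sum_fun_upd_Suc[OF assms] by (auto simp: monomials_of_def)
  show "(\<lambda>\<alpha>. \<alpha>(j := \<alpha> j - 1)) ` {\<alpha> \<in> monomials_of n (Suc d). \<alpha> j \<noteq> 0} \<subseteq> monomials_of n d"
    using assms sum_fun_upd_pred[OF assms] by (auto simp: monomials_of_def)
qed (auto simp: fun_eq_iff)

lemma monomials_of_neq_imp_less:
  assumes "\<alpha> \<in> monomials_of n d" "\<beta> \<in> monomials_of n d" "\<alpha> \<noteq> \<beta>"
  shows "\<exists>j\<le>n. \<alpha> j < \<beta> j"
proof (rule ccontr)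
  assume "\<not> (\<exists>j\<le>n. \<alpha> j < \<beta> j)"
  then have le: "\<forall>j\<in>{..n}. \<beta> j \<le> \<alpha> j" by auto
  have "sum \<beta> {..n} = sum \<alpha> {..n}" using assms by (simp add: monomials_of_def)
  then have "\<beta> j = \<alpha> j" if "j \<le> n" for j
    using sum_mono_inv[of \<beta> "{..n}" \<alpha> j] le that by auto
  moreover have "\<beta> j = \<alpha> j" if "j > n" for j using assms that by (simp add: monomials_of_def)
  ultimately show False using assms(3) by (metis not_le ext)
qed

lemma deriv_eval_mult:
  "deriv_eval n d c \<beta> (\<lambda>j. k * x j) = k ^ (d - (\<Sum>j\<le>n. \<beta> j)) * deriv_eval n d c \<beta> x"
proof -
  have monomial: "(\<Prod>j\<le>n. pow_deriv (\<alpha> j) (\<beta> j) (k * x j)) =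
        k ^ (d - (\<Sum>j\<le>n. \<beta> j)) * (\<Prod>j\<le>n. pow_deriv (\<alpha> j) (\<beta> j) (x j))"
    if \<alpha>: "\<alpha> \<in> monomials_of n d" for \<alpha>
  proof (cases "\<forall>j\<le>n. \<beta> j \<le> \<alpha> j")
    case True
    then have "(\<Sum>j\<le>n. \<alpha> j - \<beta> j) = d - (\<Sum>j\<le>n. \<beta> j)"
      using sum_subtractf_nat[of "{..n}" \<beta> \<alpha>] \<alpha> by (simp add: monomials_of_def)
    then have "(\<Prod>j\<le>n. k ^ (\<alpha> j - \<beta> j)) = k ^ (d - (\<Sum>j\<le>n. \<beta> j))"
      using power_sum[of k "\<lambda>j. \<alpha> j - \<beta> j" "{..n}"] by simp
    then show ?thesis by (simp add: pow_deriv_mult prod.distrib)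
  next
    case False
    then obtain j where j: "j \<le> n" "\<not> \<beta> j \<le> \<alpha> j" by auto
    then have "(\<Prod>j\<le>n. pow_deriv (\<alpha> j) (\<beta> j) (y j)) = 0" for y
      by (intro prod_zero bexI[of _ j]) (simp_all add: pow_deriv_def)
    from this[of "\<lambda>j. k * x j"] this[of x] show ?thesis by (simp only: mult_zero_right)
  qed
  show ?thesis
    unfolding deriv_eval_eq_pow_deriv sum_distrib_left
    by (rule sum.cong[OF refl]) (simp add: monomial algebra_simps)
qed

lemma mult_ge_mono: "mult_ge n d c q m \<Longrightarrow> m' \<le> m \<Longrightarrow> mult_ge n d c q m'"
  unfolding mult_ge_def by auto

lemma mult_ge_mult: "mult_ge n d c p m \<Longrightarrow> mult_ge n d c (\<lambda>j. k * p j) m"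
  unfolding mult_ge_def by (simp add: deriv_eval_mult)

lemma mult_ge_cong: "\<forall>j\<le>n. x j = y j \<Longrightarrow> mult_ge n d c x m \<Longrightarrow> mult_ge n d c y m"
  unfolding mult_ge_def using deriv_eval_cong by metis

text \<open>The derivative \<open>\<partial>\<^sup>\<alpha> F\<close> for a monomial \<open>\<alpha>\<close> of \<open>F\<close> is a nonzero constant.\<close>

lemma mult_ge_le_degree:
  assumes "homog_form n d c" and "c \<alpha> \<noteq> 0" and "mult_ge n d c q k"
  shows "k \<le> d"
proof (rule ccontr)
  assume "\<not> k \<le> d"
  have \<alpha>: "\<alpha> \<in> monomials_of n d" using assms(1,2) by (simp add: homog_form_def)
  then have "deriv_eval n d c \<alpha> q = 0"
    using assms(3) \<open>\<not> k \<le> d\<close> by (auto simp: mult_ge_def monomials_of_def)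
  moreover have "c \<alpha>' * (\<Prod>j\<le>n. pow_deriv (\<alpha>' j) (\<alpha> j) (q j)) = 0"
    if \<alpha>': "\<alpha>' \<in> monomials_of n d - {\<alpha>}" for \<alpha>'
  proof -
    obtain j where j: "j \<le> n" "\<alpha>' j < \<alpha> j" using monomials_of_neq_imp_less \<alpha> \<alpha>' by blast
    then show ?thesis by (intro mult_eq_0_iff[THEN iffD2] disjI2 prod_zero bexI[of _ j]) (simp_all add: pow_deriv_def)
  qed
  then have "deriv_eval n d c \<alpha> q = c \<alpha> * (\<Prod>j\<le>n. pow_deriv (\<alpha> j) (\<alpha> j) (q j))"
    unfolding deriv_eval_eq_pow_deriv
    by (subst sum.mono_neutral_right[OF finite_monomials_of, of "{\<alpha>}"]) (use \<alpha> in auto)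
  ultimately show False using assms(2) by (simp add: pow_deriv_self)
qed

section \<open>Products of linear forms\<close>

definition times_linear :: "nat \<Rightarrow> (nat \<Rightarrow> complex) \<Rightarrow> ((nat \<Rightarrow> nat) \<Rightarrow> complex) \<Rightarrow> (nat \<Rightarrow> nat) \<Rightarrow> complex"
  where "times_linear n a c \<alpha> = (\<Sum>j\<le>n. if \<alpha> j \<noteq> 0 then a j * c (\<alpha>(j := \<alpha> j - 1)) else 0)"

lemma homog_form_times_linear:
  assumes "homog_form n d c"
  shows "homog_form n (Suc d) (times_linear n a c)"
  unfolding homog_form_def
proof (intro allI impI)
  fix \<alpha> assume "times_linear n a c \<alpha> \<noteq> 0"
  then obtain j where "j \<in> {..n}"
      and "(if \<alpha> j \<noteq> 0 then a j * c (\<alpha>(j := \<alpha> j - 1)) else 0) \<noteq> 0"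
    unfolding times_linear_def by (rule sum.not_neutral_contains_not_neutral)
  then have j: "j \<le> n" "\<alpha> j \<noteq> 0" "c (\<alpha>(j := \<alpha> j - 1)) \<noteq> 0" by (auto split: if_splits)
  then have "\<alpha>(j := \<alpha> j - 1) \<in> monomials_of n d" using assms by (auto simp: homog_form_def)
  then have "(\<alpha>(j := \<alpha> j - 1))(j := Suc ((\<alpha>(j := \<alpha> j - 1)) j)) \<in> monomials_of n (Suc d)"
    using bij_betw_imp_surj_on[OF bij_betw_monomials_of_Suc[OF j(1), of d]] by blast
  moreover have "(\<alpha>(j := \<alpha> j - 1))(j := Suc ((\<alpha>(j := \<alpha> j - 1)) j)) = \<alpha>"
    using j by (auto simp: fun_eq_iff)
  ultimately show "\<alpha> \<in> monomials_of n (Suc d)" by simp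
qed

lemma deriv_eval_times_linear:
  assumes "homog_form n d c"
  shows "deriv_eval n (Suc d) (times_linear n a c) \<beta> x =
    (\<Sum>j\<le>n. a j * x j) * deriv_eval n d c \<beta> x +
    (\<Sum>j\<le>n. if \<beta> j = 0 then 0 else a j * of_nat (\<beta> j) * deriv_eval n d c (\<beta>(j := \<beta> j - 1)) x)"
proof -
  define P where "P \<gamma> \<alpha> = (\<Prod>k\<le>n. pow_deriv (\<alpha> k) (\<gamma> k) (x k))" for \<gamma> \<alpha> :: "nat \<Rightarrow> nat"
  have D: "deriv_eval n e c' \<gamma> x = (\<Sum>\<alpha>\<in>monomials_of n e. c' \<alpha> * P \<gamma> \<alpha>)" for e c' \<gamma>
    unfolding deriv_eval_eq_pow_deriv P_def ..
  have reindex: "(\<Sum>\<alpha>\<in>monomials_of n (Suc d). if \<alpha> j \<noteq> 0 then c (\<alpha>(j := \<alpha> j - 1)) * P \<beta> \<alpha> else 0)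
      = (\<Sum>\<alpha>\<in>monomials_of n d. c \<alpha> * P \<beta> (\<alpha>(j := Suc (\<alpha> j))))" if "j \<le> n" for j
    unfolding sum.inter_filter[OF finite_monomials_of, symmetric]
    by (subst sum.reindex_bij_betw[OF bij_betw_monomials_of_Suc[OF that], symmetric]) simp
  have leibniz: "P \<beta> (\<alpha>(j := Suc (\<alpha> j))) = x j * P \<beta> \<alpha> +
      (if \<beta> j = 0 then 0 else of_nat (\<beta> j) * P (\<beta>(j := \<beta> j - 1)) \<alpha>)" if "j \<le> n" for j \<alpha>
  proof -
    define R where "R = (\<Prod>k\<in>{..n}-{j}. pow_deriv (\<alpha> k) (\<beta> k) (x k))"
    have "P \<gamma> \<alpha>' = pow_deriv (\<alpha>' j) (\<gamma> j) (x j) * R"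
      if "\<forall>k. k \<noteq> j \<longrightarrow> \<alpha>' k = \<alpha> k \<and> \<gamma> k = \<beta> k" for \<gamma> \<alpha>'
      unfolding P_def R_def using \<open>j \<le> n\<close> that
      by (subst prod.remove[of _ j]) (auto intro!: prod.cong)
    then show ?thesis by (simp add: pow_deriv_Suc algebra_simps)
  qed
  have "deriv_eval n (Suc d) (times_linear n a c) \<beta> x =
      (\<Sum>\<alpha>\<in>monomials_of n (Suc d). \<Sum>j\<le>n. a j * (if \<alpha> j \<noteq> 0 then c (\<alpha>(j := \<alpha> j - 1)) * P \<beta> \<alpha> else 0))"
    unfolding D times_linear_def by (auto simp: sum_distrib_right intro!: sum.cong)
  also have "\<dots> = (\<Sum>j\<le>n. a j * (\<Sum>\<alpha>\<in>monomials_of n (Suc d). if \<alpha> j \<noteq> 0 then c (\<alpha>(j := \<alpha> j - 1)) * P \<beta> \<alpha> else 0))"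
    by (simp add: sum.swap[of _ "monomials_of n (Suc d)"] sum_distrib_left)
  also have "\<dots> = (\<Sum>j\<le>n. a j * (\<Sum>\<alpha>\<in>monomials_of n d. c \<alpha> * (x j * P \<beta> \<alpha> +
      (if \<beta> j = 0 then 0 else of_nat (\<beta> j) * P (\<beta>(j := \<beta> j - 1)) \<alpha>))))"
    by (rule sum.cong[OF refl]) (simp only: atMost_iff reindex leibniz)
  also have "\<dots> = (\<Sum>j\<le>n. a j * x j * deriv_eval n d c \<beta> x +
      (if \<beta> j = 0 then 0 else a j * of_nat (\<beta> j) * deriv_eval n d c (\<beta>(j := \<beta> j - 1)) x))"
    unfolding D by (rule sum.cong[OF refl])
      (simp add: algebra_simps sum.distrib sum_distrib_left sum_distrib_right)
  finally show ?thesis by (simp add: sum.distrib sum_distrib_right)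
qed

lemma mult_ge_times_linear:
  assumes "homog_form n d c" and "mult_ge n d c q k"
  shows "mult_ge n (Suc d) (times_linear n a c) q (k + (if (\<Sum>j\<le>n. a j * q j) = 0 then 1 else 0))"
  unfolding mult_ge_def
proof (intro allI impI)
  fix \<beta> :: "nat \<Rightarrow> nat" assume \<beta>: "\<forall>j>n. \<beta> j = 0"
    and less: "(\<Sum>j\<le>n. \<beta> j) < k + (if (\<Sum>j\<le>n. a j * q j) = 0 then 1 else 0)"
  have "(\<Sum>j\<le>n. a j * q j) * deriv_eval n d c \<beta> q = 0"
    using assms(2) \<beta> less unfolding mult_ge_def by (cases "(\<Sum>j\<le>n. a j * q j) = 0") auto
  moreover have "(if \<beta> j = 0 then 0 else a j * of_nat (\<beta> j) * deriv_eval n d c (\<beta>(j := \<beta> j - 1)) q) = 0"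
    if "j \<le> n" for j
  proof (cases "\<beta> j = 0")
    case False
    have "\<beta> j \<le> (\<Sum>i\<le>n. \<beta> i)" using that member_le_sum[of j "{..n}" \<beta>] by simp
    then have "(\<Sum>i\<le>n. (\<beta>(j := \<beta> j - 1)) i) < k"
      using sum_fun_upd_pred[of j n \<beta>] less that False by (simp split: if_splits)
    then show ?thesis using assms(2) \<beta> that unfolding mult_ge_def by simp
  qed simp
  ultimately show "deriv_eval n (Suc d) (times_linear n a c) \<beta> q = 0"
    unfolding deriv_eval_times_linear[OF assms(1)] by simp
qed

definition one_form :: "(nat \<Rightarrow> nat) \<Rightarrow> complex" where
  "one_form \<alpha> = (if \<alpha> = (\<lambda>_. 0) then 1 else 0)"

lemma homog_form_one_form: "homog_form n 0 one_form"
  by (auto simp: homog_form_def one_form_def monomials_of_0)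

lemma deriv_eval_one_form: "deriv_eval n 0 one_form (\<lambda>_. 0) x = 1"
  by (simp add: deriv_eval_0 monomials_of_0 one_form_def)

primrec prod_linear :: "nat \<Rightarrow> (nat \<Rightarrow> nat \<Rightarrow> complex) \<Rightarrow> nat \<Rightarrow> (nat \<Rightarrow> nat) \<Rightarrow> complex" where
  "prod_linear n a 0 = one_form"
| "prod_linear n a (Suc k) = times_linear n (a k) (prod_linear n a k)"

lemma homog_form_prod_linear: "homog_form n k (prod_linear n a k)"
  by (induct k) (simp_all add: homog_form_one_form homog_form_times_linear)

lemma deriv_eval_prod_linear:
  "deriv_eval n k (prod_linear n a k) (\<lambda>_. 0) x = (\<Prod>l<k. \<Sum>j\<le>n. a l j * x j)"
  by (induct k) (simp_all add: deriv_eval_one_form deriv_eval_times_linear homog_form_prod_linear)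

lemma mult_ge_prod_linear:
  "mult_ge n k (prod_linear n a k) q (card {l. l < k \<and> (\<Sum>j\<le>n. a l j * q j) = 0})"
proof (induct k)
  case 0
  show ?case by (simp add: mult_ge_def)
next
  case (Suc k)
  have "card {l. l < Suc k \<and> (\<Sum>j\<le>n. a l j * q j) = 0} =
        card {l. l < k \<and> (\<Sum>j\<le>n. a l j * q j) = 0} + (if (\<Sum>j\<le>n. a k j * q j) = 0 then 1 else 0)"
  proof (cases "(\<Sum>j\<le>n. a k j * q j) = 0")
    case True
    then have "{l. l < Suc k \<and> (\<Sum>j\<le>n. a l j * q j) = 0} =
               insert k {l. l < k \<and> (\<Sum>j\<le>n. a l j * q j) = 0}" by (auto simp: less_Suc_eq)
    then show ?thesis using True by simp
  next
    case False
    then have "{l. l < Suc k \<and> (\<Sum>j\<le>n. a l j * q j) = 0} =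
               {l. l < k \<and> (\<Sum>j\<le>n. a l j * q j) = 0}" by (auto simp: less_Suc_eq)
    then show ?thesis using False by simp
  qed
  then show ?case using mult_ge_times_linear[OF homog_form_prod_linear Suc] by simp
qed

section \<open>Restriction to a parametrized curve\<close>

definition partial_form :: "nat \<Rightarrow> ((nat \<Rightarrow> nat) \<Rightarrow> complex) \<Rightarrow> (nat \<Rightarrow> nat) \<Rightarrow> complex" where
  "partial_form j c \<alpha> = of_nat (Suc (\<alpha> j)) * c (\<alpha>(j := Suc (\<alpha> j)))"

lemma homog_form_partial_form:
  assumes "homog_form n (Suc d) c" and "j \<le> n"
  shows "homog_form n d (partial_form j c)"
  unfolding homog_form_def
proof (intro allI impI)
  fix \<alpha> assume "partial_form j c \<alpha> \<noteq> 0"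
  then have "\<alpha>(j := Suc (\<alpha> j)) \<in> monomials_of n (Suc d)"
    using assms(1) by (simp add: partial_form_def homog_form_def)
  then show "\<alpha> \<in> monomials_of n d"
    using assms(2) sum_fun_upd_Suc[OF assms(2), of \<alpha>]
    by (auto simp: monomials_of_def split: if_splits)
qed

lemma deriv_eval_partial_form:
  assumes "homog_form n (Suc d) c" and "j \<le> n"
  shows "deriv_eval n d (partial_form j c) \<beta> x = deriv_eval n (Suc d) c (\<beta>(j := Suc (\<beta> j))) x"
proof -
  define \<beta>' where "\<beta>' = \<beta>(j := Suc (\<beta> j))"
  define P where "P \<gamma> \<alpha> = (\<Prod>k\<le>n. pow_deriv (\<alpha> k) (\<gamma> k) (x k))" for \<gamma> \<alpha> :: "nat \<Rightarrow> nat"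
  have j: "j \<in> {..n}" using assms(2) by simp
  have P_zero: "P \<beta>' \<alpha> = 0" if "\<alpha> j = 0" for \<alpha>
  proof -
    have "pow_deriv (\<alpha> j) (\<beta>' j) (x j) = 0" using that by (simp add: pow_deriv_def \<beta>'_def)
    then show ?thesis unfolding P_def using j by (metis finite_atMost prod_zero)
  qed
  have P_Suc: "P \<beta>' (\<alpha>(j := Suc (\<alpha> j))) = of_nat (Suc (\<alpha> j)) * P \<beta> \<alpha>" for \<alpha>
  proof -
    define R where "R = (\<Prod>k\<in>{..n}-{j}. pow_deriv (\<alpha> k) (\<beta> k) (x k))"
    have "P \<beta>' (\<alpha>(j := Suc (\<alpha> j))) = pow_deriv (Suc (\<alpha> j)) (Suc (\<beta> j)) (x j) * R"
      unfolding P_def R_def \<beta>'_def by (subst prod.remove[OF finite_atMost j]) (auto intro!: prod.cong)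
    moreover have "P \<beta> \<alpha> = pow_deriv (\<alpha> j) (\<beta> j) (x j) * R"
      unfolding P_def R_def by (subst prod.remove[OF finite_atMost j]) (auto intro!: prod.cong)
    ultimately show ?thesis by (simp add: pow_deriv_Suc_Suc)
  qed
  have "deriv_eval n (Suc d) c \<beta>' x = (\<Sum>\<alpha>\<in>monomials_of n (Suc d). if \<alpha> j \<noteq> 0 then c \<alpha> * P \<beta>' \<alpha> else 0)"
    unfolding deriv_eval_eq_pow_deriv P_def[symmetric] by (rule sum.cong[OF refl]) (simp add: P_zero)
  also have "\<dots> = (\<Sum>\<alpha>\<in>monomials_of n d. c (\<alpha>(j := Suc (\<alpha> j))) * P \<beta>' (\<alpha>(j := Suc (\<alpha> j))))"
    unfolding sum.inter_filter[OF finite_monomials_of, symmetric]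
    by (subst sum.reindex_bij_betw[OF bij_betw_monomials_of_Suc[OF assms(2)], symmetric]) simp
  also have "\<dots> = deriv_eval n d (partial_form j c) \<beta> x"
    unfolding deriv_eval_eq_pow_deriv P_def[symmetric] partial_form_def
    by (rule sum.cong[OF refl]) (simp add: P_Suc)
  finally show ?thesis unfolding \<beta>'_def by simp
qed

lemma mult_ge_partial_form:
  assumes "homog_form n (Suc d) c" and "j \<le> n" and "mult_ge n (Suc d) c p (Suc k)"
  shows "mult_ge n d (partial_form j c) p k"
  unfolding mult_ge_def
proof (intro allI impI)
  fix \<beta> :: "nat \<Rightarrow> nat" assume "\<forall>j>n. \<beta> j = 0" and "(\<Sum>j\<le>n. \<beta> j) < k"
  then have "deriv_eval n (Suc d) c (\<beta>(j := Suc (\<beta> j))) p = 0"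
    using assms(2,3) sum_fun_upd_Suc[OF assms(2), of \<beta>] unfolding mult_ge_def by simp
  then show "deriv_eval n d (partial_form j c) \<beta> p = 0"
    by (simp add: deriv_eval_partial_form[OF assms(1,2)])
qed

definition restrict_curve :: "nat \<Rightarrow> nat \<Rightarrow> ((nat \<Rightarrow> nat) \<Rightarrow> complex) \<Rightarrow> (nat \<Rightarrow> complex poly) \<Rightarrow> complex poly"
  where "restrict_curve n d c \<gamma> = (\<Sum>\<alpha>\<in>monomials_of n d. smult (c \<alpha>) (\<Prod>j\<le>n. \<gamma> j ^ \<alpha> j))"

lemma poly_restrict_curve:
  "poly (restrict_curve n d c \<gamma>) t = deriv_eval n d c (\<lambda>_. 0) (\<lambda>j. poly (\<gamma> j) t)"
  by (simp add: restrict_curve_def deriv_eval_0 poly_sum poly_prod)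

lemma degree_restrict_curve:
  assumes "\<forall>j\<le>n. degree (\<gamma> j) \<le> e"
  shows "degree (restrict_curve n d c \<gamma>) \<le> d * e"
  unfolding restrict_curve_def
proof (rule degree_sum_le[OF finite_monomials_of])
  fix \<alpha> assume \<alpha>: "\<alpha> \<in> monomials_of n d"
  have "degree (\<Prod>j\<le>n. \<gamma> j ^ \<alpha> j) \<le> (\<Sum>j\<le>n. degree (\<gamma> j ^ \<alpha> j))"
    using degree_prod_sum_le[of "{..n}" "\<lambda>j. \<gamma> j ^ \<alpha> j"] by (simp add: o_def)
  also have "\<dots> \<le> (\<Sum>j\<le>n. \<alpha> j * e)"
  proof (rule sum_mono)
    fix j assume "j \<in> {..n}"
    then have "degree (\<gamma> j) \<le> e" using assms by simp
    then show "degree (\<gamma> j ^ \<alpha> j) \<le> \<alpha> j * e"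
      using degree_power_le[of "\<gamma> j" "\<alpha> j"] by (metis mult.commute mult_le_mono1 order_trans)
  qed
  also have "\<dots> = d * e" using \<alpha> by (simp add: monomials_of_def sum_distrib_right[symmetric])
  finally show "degree (smult (c \<alpha>) (\<Prod>j\<le>n. \<gamma> j ^ \<alpha> j)) \<le> d * e"
    using degree_smult_le le_trans by blast
qed

lemma smult_sum_right: "smult a (\<Sum>x\<in>A. f x) = (\<Sum>x\<in>A. smult a (f x))"
  by (induct A rule: infinite_finite_induct) (simp_all add: smult_add_right)

lemma pderiv_restrict_curve:
  assumes "homog_form n (Suc d) c"
  shows "pderiv (restrict_curve n (Suc d) c \<gamma>) = (\<Sum>j\<le>n. restrict_curve n d (partial_form j c) \<gamma> * pderiv (\<gamma> j))"
proof -
  define Q where "Q \<alpha> = (\<Prod>j\<le>n. \<gamma> j ^ \<alpha> j)" for \<alpha> :: "nat \<Rightarrow> nat"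
  define R where "R j \<alpha> = (\<Prod>k\<in>{..n}-{j}. \<gamma> k ^ \<alpha> k) * \<gamma> j ^ (\<alpha> j - 1)" for j and \<alpha> :: "nat \<Rightarrow> nat"
  have pderiv_Q: "pderiv (Q \<alpha>) = (\<Sum>j\<le>n. smult (of_nat (\<alpha> j)) (R j \<alpha>) * pderiv (\<gamma> j))" for \<alpha>
    unfolding Q_def R_def pderiv_prod by (rule sum.cong[OF refl]) (simp add: pderiv_power algebra_simps)
  have R_Suc: "R j (\<alpha>(j := Suc (\<alpha> j))) = Q \<alpha>" if "j \<le> n" for j \<alpha>
  proof -
    have "Q \<alpha> = \<gamma> j ^ \<alpha> j * (\<Prod>k\<in>{..n}-{j}. \<gamma> k ^ \<alpha> k)"
      unfolding Q_def using that by (subst prod.remove[of _ j]) auto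
    moreover have "(\<Prod>k\<in>{..n}-{j}. \<gamma> k ^ (\<alpha>(j := Suc (\<alpha> j))) k) = (\<Prod>k\<in>{..n}-{j}. \<gamma> k ^ \<alpha> k)"
      by (rule prod.cong) auto
    ultimately show ?thesis unfolding R_def by (simp add: mult.commute)
  qed
  have coeff_j: "(\<Sum>\<alpha>\<in>monomials_of n (Suc d). smult (c \<alpha> * of_nat (\<alpha> j)) (R j \<alpha>))
      = restrict_curve n d (partial_form j c) \<gamma>" if "j \<le> n" for j
  proof -
    have "(\<Sum>\<alpha>\<in>monomials_of n (Suc d). smult (c \<alpha> * of_nat (\<alpha> j)) (R j \<alpha>))
        = (\<Sum>\<alpha>\<in>monomials_of n (Suc d). if \<alpha> j \<noteq> 0 then smult (c \<alpha> * of_nat (\<alpha> j)) (R j \<alpha>) else 0)"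
      by (rule sum.cong) auto
    also have "\<dots> = (\<Sum>\<alpha>\<in>monomials_of n d. smult (c (\<alpha>(j := Suc (\<alpha> j))) * of_nat (Suc (\<alpha> j))) (R j (\<alpha>(j := Suc (\<alpha> j)))))"
      unfolding sum.inter_filter[OF finite_monomials_of, symmetric]
      by (subst sum.reindex_bij_betw[OF bij_betw_monomials_of_Suc[OF that], symmetric]) simp
    also have "\<dots> = restrict_curve n d (partial_form j c) \<gamma>"
      unfolding restrict_curve_def partial_form_def Q_def[symmetric]
      by (rule sum.cong[OF refl]) (simp add: R_Suc[OF that] mult.commute)
    finally show ?thesis .
  qed
  have "pderiv (restrict_curve n (Suc d) c \<gamma>) =
      (\<Sum>\<alpha>\<in>monomials_of n (Suc d). \<Sum>j\<le>n. smult (c \<alpha> * of_nat (\<alpha> j)) (R j \<alpha>) * pderiv (\<gamma> j))"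
    unfolding restrict_curve_def Q_def[symmetric] higher_pderiv_sum[of 1, simplified] pderiv_smult pderiv_Q
    by (simp add: smult_sum_right)
  also have "\<dots> = (\<Sum>j\<le>n. (\<Sum>\<alpha>\<in>monomials_of n (Suc d). smult (c \<alpha> * of_nat (\<alpha> j)) (R j \<alpha>)) * pderiv (\<gamma> j))"
    by (simp add: sum.swap[of _ "monomials_of n (Suc d)"] sum_distrib_right)
  finally show ?thesis by (simp add: coeff_j)
qed

lemma power_dvd_if_root_and_dvd_pderiv:
  fixes P :: "'a::{idom,semiring_char_0} poly"
  assumes "poly P a = 0" and "[:-a, 1:] ^ m dvd pderiv P"
  shows "[:-a, 1:] ^ Suc m dvd P"
proof (cases "P = 0")
  case False
  show ?thesis
  proof (cases "pderiv P = 0")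
    case True
    then have "P = [:coeff P 0:]" by (simp add: pderiv_eq_0_iff degree_0_id)
    moreover have "poly [:coeff P 0:] a = coeff P 0" by simp
    ultimately have "P = 0" using assms(1) by (metis pCons_0_0)
    then show ?thesis using \<open>P \<noteq> 0\<close> by simp
  next
    case False
    then have "m \<le> order a (pderiv P)" using assms(2) order_divides by blast
    then have "Suc m \<le> order a P" using order_pderiv[OF \<open>P \<noteq> 0\<close> assms(1)] by simp
    then show ?thesis using order_divides by blast
  qed
qed simp

text \<open>By the chain rule, the derivative of \<open>F \<circ> \<gamma>\<close> is a combination of the \<open>\<partial>F/\<partial>x\<^sub>j \<circ> \<gamma>\<close>,
  which have multiplicity \<open>m - 1\<close>.\<close>

lemma power_dvd_restrict_curve:
  "homog_form n d c \<Longrightarrow> mult_ge n d c (\<lambda>j. poly (\<gamma> j) a) m \<Longrightarrow>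
   [:-a, 1:] ^ m dvd restrict_curve n d c \<gamma>"
proof (induct m arbitrary: d c)
  case 0
  then show ?case by simp
next
  case (Suc m)
  have root: "poly (restrict_curve n d c \<gamma>) a = 0"
    using Suc.prems(2) unfolding poly_restrict_curve mult_ge_def by simp
  show ?case
  proof (cases d)
    case 0
    then have "restrict_curve n d c \<gamma> = 0"
      using root by (simp add: restrict_curve_def monomials_of_0)
    then show ?thesis by simp
  next
    case (Suc d')
    then have "[:-a, 1:] ^ m dvd restrict_curve n d' (partial_form j c) \<gamma>" if "j \<le> n" for j
      using Suc.hyps homog_form_partial_form mult_ge_partial_form Suc.prems that by simp
    then have "[:-a, 1:] ^ m dvd pderiv (restrict_curve n d c \<gamma>)"
      unfolding Suc pderiv_restrict_curve[OF Suc.prems(1)[unfolded Suc]]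
      by (auto intro!: dvd_sum dvd_mult2)
    then show ?thesis using power_dvd_if_root_and_dvd_pderiv root by blast
  qed
qed

lemma sum_order_le_degree_on:
  fixes P :: "'a::idom poly"
  assumes "P \<noteq> 0" and "finite A"
  shows "(\<Sum>x\<in>A. order x P) \<le> degree P"
proof -
  have "(\<Sum>x\<in>A. order x P) = (\<Sum>x\<in>A \<inter> {x. poly P x = 0}. order x P)"
    by (rule sum.mono_neutral_right[OF assms(2)]) (auto simp: order_0I)
  also have "\<dots> \<le> (\<Sum>x | poly P x = 0. order x P)"
    using poly_roots_finite[OF assms(1)] by (intro sum_mono2) auto
  also have "\<dots> \<le> degree P" by (rule sum_order_le_degree[OF assms(1)])
  finally show ?thesis .
qed

lemma sum_mult_le_degree_restrict_curve:
  assumes "homog_form n d c" and "restrict_curve n d c \<gamma> \<noteq> 0"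
    and "finite I" and "inj_on t I"
    and "\<forall>i\<in>I. \<forall>j\<le>n. poly (\<gamma> j) (t i) = \<kappa> i * p i j"
    and "\<forall>i\<in>I. mult_ge n d c (p i) (m i)"
  shows "(\<Sum>i\<in>I. m i) \<le> degree (restrict_curve n d c \<gamma>)"
proof -
  have "m i \<le> order (t i) (restrict_curve n d c \<gamma>)" if "i \<in> I" for i
  proof -
    have "mult_ge n d c (\<lambda>j. \<kappa> i * p i j) (m i)"
      using assms(6) that by (simp add: mult_ge_mult)
    then have "mult_ge n d c (\<lambda>j. poly (\<gamma> j) (t i)) (m i)"
      by (rule mult_ge_cong[rotated]) (use assms(5) that in simp)
    then have "[:-t i, 1:] ^ m i dvd restrict_curve n d c \<gamma>"
      using power_dvd_restrict_curve[OF assms(1)] by blast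
    then show ?thesis using assms(2) order_divides by blast
  qed
  then have "(\<Sum>i\<in>I. m i) \<le> (\<Sum>i\<in>I. order (t i) (restrict_curve n d c \<gamma>))" by (rule sum_mono)
  also have "\<dots> = (\<Sum>x\<in>t ` I. order x (restrict_curve n d c \<gamma>))"
    by (simp add: sum.reindex[OF assms(4)])
  also have "\<dots> \<le> degree (restrict_curve n d c \<gamma>)"
    using sum_order_le_degree_on[OF assms(2)] assms(3) by simp
  finally show ?thesis .
qed

section \<open>Nonvanishing of nonzero polynomials\<close>

lemma ex_common_nonroot:
  fixes \<Q> :: "'a::{idom,ring_char_0} poly set"
  assumes "finite \<Q>" and "0 \<notin> \<Q>"
  shows "\<exists>z. \<forall>Q\<in>\<Q>. poly Q z \<noteq> 0"
proof -
  have "finite (\<Union>Q\<in>\<Q>. {z. poly Q z = 0})"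
    using assms by (intro finite_UN_I) (auto intro: poly_roots_finite)
  then obtain z where "z \<notin> (\<Union>Q\<in>\<Q>. {z. poly Q z = 0})"
    using ex_new_if_finite[OF infinite_UNIV_char_0] by blast
  then show ?thesis by auto
qed

lemma base_digits_unique:
  fixes a b :: "nat \<Rightarrow> nat"
  assumes "\<forall>k. a k < B" "\<forall>k. b k < B" "(\<Sum>k<N. a k * B ^ k) = (\<Sum>k<N. b k * B ^ k)"
  shows "\<forall>k<N. a k = b k"
  using assms
proof (induct N arbitrary: a b)
  case 0
  then show ?case by simp
next
  case (Suc N)
  have shift: "(\<Sum>k<Suc N. f k * B ^ k) = f 0 + B * (\<Sum>k<N. f (Suc k) * B ^ k)" for f :: "nat \<Rightarrow> nat"
    by (subst sum.lessThan_Suc_shift) (simp add: sum_distrib_left algebra_simps)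
  have digits: "a 0 < B" "b 0 < B" using Suc.prems(1,2) by auto
  have eq: "a 0 + B * (\<Sum>k<N. a (Suc k) * B ^ k) = b 0 + B * (\<Sum>k<N. b (Suc k) * B ^ k)"
    using Suc.prems(3) by (simp only: shift)
  have "(a 0 + B * (\<Sum>k<N. a (Suc k) * B ^ k)) mod B = a 0"
       "(b 0 + B * (\<Sum>k<N. b (Suc k) * B ^ k)) mod B = b 0" using digits by simp_all
  then have "a 0 = b 0" using eq by metis
  moreover have "\<forall>k<N. a (Suc k) = b (Suc k)"
  proof (rule Suc.hyps)
    show "(\<Sum>k<N. a (Suc k) * B ^ k) = (\<Sum>k<N. b (Suc k) * B ^ k)"
      using eq digits \<open>a 0 = b 0\<close> by simp
  qed (use Suc.prems(1,2) in auto)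
  ultimately show ?case by (auto simp: less_Suc_eq_0_disj)
qed

lemma ex_bound_finite_support:
  fixes e :: "'x \<Rightarrow> nat \<Rightarrow> nat"
  assumes "finite S" and "\<forall>\<gamma>\<in>S. \<forall>k\<ge>N. e \<gamma> k = 0"
  shows "\<exists>B. \<forall>\<gamma>\<in>S. \<forall>k. e \<gamma> k < B"
proof -
  have "e \<gamma> k < Suc (\<Sum>\<gamma>\<in>S. \<Sum>k<N. e \<gamma> k)" if "\<gamma> \<in> S" for \<gamma> k
  proof (cases "k < N")
    case True
    have "e \<gamma> k \<le> (\<Sum>k<N. e \<gamma> k)" using True member_le_sum[of k "{..<N}" "e \<gamma>"] by simp
    also have "\<dots> \<le> (\<Sum>\<gamma>\<in>S. \<Sum>k<N. e \<gamma> k)"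
      using that assms(1) member_le_sum[of \<gamma> S "\<lambda>\<gamma>. \<Sum>k<N. e \<gamma> k"] by simp
    finally show ?thesis by simp
  qed (use assms(2) that in simp)
  then show ?thesis by blast
qed

text \<open>Kronecker substitution \<open>x\<^sub>k := z\<^bsup>B\<^sup>k\<^esup>\<close>: with exponents below \<open>B\<close>, distinct monomials become
  distinct powers of \<open>z\<close>, so a nonzero polynomial stays nonzero.\<close>

lemma kronecker_substitution_nonzero:
  fixes e :: "'x \<Rightarrow> nat \<Rightarrow> nat" and a :: "'x \<Rightarrow> complex"
  assumes "finite S" and "inj_on e S" and "\<forall>\<gamma>\<in>S. \<forall>k\<ge>N. e \<gamma> k = 0"
    and "\<gamma>\<^sub>0 \<in> S" "a \<gamma>\<^sub>0 \<noteq> 0"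
  shows "\<exists>B z. (\<Sum>\<gamma>\<in>S. a \<gamma> * (\<Prod>k<N. (z ^ (B ^ k)) ^ e \<gamma> k)) \<noteq> 0"
proof -
  obtain B where B: "\<forall>\<gamma>\<in>S. \<forall>k. e \<gamma> k < B" using ex_bound_finite_support[OF assms(1,3)] by blast
  define enc where "enc \<gamma> = (\<Sum>k<N. e \<gamma> k * B ^ k)" for \<gamma>
  have "inj_on enc S"
  proof (rule inj_onI)
    fix \<gamma> \<gamma>' assume \<gamma>: "\<gamma> \<in> S" "\<gamma>' \<in> S" "enc \<gamma> = enc \<gamma>'"
    then have "\<forall>k<N. e \<gamma> k = e \<gamma>' k"
      using base_digits_unique[of "e \<gamma>" B "e \<gamma>'"] B unfolding enc_def by blast
    moreover have "\<forall>k\<ge>N. e \<gamma> k = e \<gamma>' k" using assms(3) \<gamma>(1,2) by simp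
    ultimately have "e \<gamma> = e \<gamma>'" by (metis ext not_less)
    then show "\<gamma> = \<gamma>'" using assms(2) \<gamma>(1,2) by (simp add: inj_on_eq_iff)
  qed
  define Q where "Q = (\<Sum>\<gamma>\<in>S. monom (a \<gamma>) (enc \<gamma>))"
  have "coeff Q (enc \<gamma>\<^sub>0) = (\<Sum>\<gamma>\<in>S. if \<gamma> = \<gamma>\<^sub>0 then a \<gamma> else 0)"
    unfolding Q_def coeff_sum coeff_monom
    using \<open>inj_on enc S\<close> assms(4) by (intro sum.cong) (auto dest: inj_onD)
  then have "Q \<noteq> 0" using assms(1,4,5) by auto
  then obtain z where "poly Q z \<noteq> 0" using ex_common_nonroot[of "{Q}"] by auto
  moreover have "poly Q z = (\<Sum>\<gamma>\<in>S. a \<gamma> * (\<Prod>k<N. (z ^ (B ^ k)) ^ e \<gamma> k))"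
    unfolding Q_def poly_sum poly_monom enc_def
    by (rule sum.cong[OF refl]) (simp add: power_sum power_mult[symmetric] mult.commute)
  ultimately show ?thesis by auto
qed

lemma homog_form_nonzero_at:
  assumes "homog_form n d c" and "c \<alpha>\<^sub>0 \<noteq> 0"
  shows "\<exists>x. deriv_eval n d c (\<lambda>_. 0) x \<noteq> 0"
proof -
  have "\<forall>\<alpha>\<in>monomials_of n d. \<forall>k\<ge>Suc n. \<alpha> k = 0" by (auto simp: monomials_of_def)
  moreover have "\<alpha>\<^sub>0 \<in> monomials_of n d" using assms by (simp add: homog_form_def)
  ultimately obtain B z where "(\<Sum>\<alpha>\<in>monomials_of n d. c \<alpha> * (\<Prod>k<Suc n. (z ^ (B ^ k)) ^ \<alpha> k)) \<noteq> 0"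
    using kronecker_substitution_nonzero[OF finite_monomials_of inj_on_id[unfolded id_def]] assms(2)
    by blast
  then have "deriv_eval n d c (\<lambda>_. 0) (\<lambda>j. z ^ (B ^ j)) \<noteq> 0"
    unfolding deriv_eval_0 lessThan_Suc_atMost .
  then show ?thesis by blast
qed

lemma prod_lessThan_mult:
  fixes f :: "nat \<Rightarrow> 'a::comm_monoid_mult"
  shows "(\<Prod>i<s. \<Prod>j<m. f (i * m + j)) = (\<Prod>k<s * m. f k)"
proof (induct s)
  case (Suc s)
  have split: "(\<Prod>k<a + b. f k) = (\<Prod>k<a. f k) * (\<Prod>j<b. f (a + j))" for a b
    by (induct b) (simp_all add: algebra_simps)
  show ?case using Suc split[of "s * m" m] by (simp add: add.commute)
qed simp

text \<open>Flatten the coordinates \<open>(i, j)\<close> to \<open>i (n + 1) + j\<close> and substitute as above.\<close>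

lemma geval_nonzero_at:
  fixes G :: "(nat \<Rightarrow> nat \<Rightarrow> nat) \<Rightarrow> complex"
  assumes fin: "finite {\<gamma>. G \<gamma> \<noteq> 0}" and ne: "{\<gamma>. G \<gamma> \<noteq> 0} \<noteq> {}"
    and supp: "\<forall>\<gamma>. G \<gamma> \<noteq> 0 \<longrightarrow> (\<forall>i j. \<gamma> i j \<noteq> 0 \<longrightarrow> i < s \<and> j \<le> n)"
  shows "\<exists>q. geval n s G q \<noteq> 0"
proof -
  define S where "S = {\<gamma>. G \<gamma> \<noteq> 0}"
  define m where "m = Suc n"
  have "0 < m" by (simp add: m_def)
  define e where "e \<gamma> k = \<gamma> (k div m) (k mod m)" for \<gamma> :: "nat \<Rightarrow> nat \<Rightarrow> nat" and k
  have e_pos: "e \<gamma> (i * m + j) = \<gamma> i j" if "j < m" for \<gamma> i j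
    using that \<open>0 < m\<close> by (simp add: e_def)
  have outside: "\<gamma> i j = 0" if "\<gamma> \<in> S" "\<not> (i < s \<and> j < m)" for \<gamma> i j
  proof (rule ccontr)
    assume "\<gamma> i j \<noteq> 0"
    then have "i < s \<and> j \<le> n" using supp that(1) by (auto simp: S_def)
    then show False using that(2) by (simp add: m_def)
  qed
  have "inj_on e S"
  proof (rule inj_onI)
    fix \<gamma> \<gamma>' assume \<gamma>: "\<gamma> \<in> S" "\<gamma>' \<in> S" "e \<gamma> = e \<gamma>'"
    have "\<gamma> i j = \<gamma>' i j" for i j
    proof (cases "i < s \<and> j < m")
      case True
      then show ?thesis using e_pos[of j \<gamma> i] e_pos[of j \<gamma>' i] \<gamma>(3) by simp
    next
      case False
      then show ?thesis using outside[OF \<gamma>(1) False] outside[OF \<gamma>(2) False] by simp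
    qed
    then show "\<gamma> = \<gamma>'" by (simp add: fun_eq_iff)
  qed
  have e_zero: "\<forall>\<gamma>\<in>S. \<forall>k\<ge>s * m. e \<gamma> k = 0"
  proof (intro ballI allI impI)
    fix \<gamma> k assume "\<gamma> \<in> S" "s * m \<le> k"
    then have "\<not> k div m < s" using \<open>0 < m\<close> by (simp add: div_less_iff_less_mult)
    then show "e \<gamma> k = 0" unfolding e_def using outside[OF \<open>\<gamma> \<in> S\<close>] by simp
  qed
  obtain \<gamma>\<^sub>0 where "\<gamma>\<^sub>0 \<in> S" "G \<gamma>\<^sub>0 \<noteq> 0" using ne by (auto simp: S_def)
  then obtain B z where z: "(\<Sum>\<gamma>\<in>S. G \<gamma> * (\<Prod>k<s * m. (z ^ (B ^ k)) ^ e \<gamma> k)) \<noteq> 0"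
    using kronecker_substitution_nonzero[OF fin[folded S_def] \<open>inj_on e S\<close> e_zero] by blast
  define q where "q i j = z ^ (B ^ (i * m + j))" for i j
  have "(\<Prod>i<s. \<Prod>j\<le>n. q i j ^ \<gamma> i j) = (\<Prod>k<s * m. (z ^ (B ^ k)) ^ e \<gamma> k)" for \<gamma>
  proof -
    have "(\<Prod>i<s. \<Prod>j\<le>n. q i j ^ \<gamma> i j) = (\<Prod>i<s. \<Prod>j<m. (z ^ (B ^ (i * m + j))) ^ e \<gamma> (i * m + j))"
      unfolding lessThan_Suc_atMost[symmetric] m_def[symmetric]
      by (intro prod.cong refl) (simp add: q_def e_pos)
    also have "\<dots> = (\<Prod>k<s * m. (z ^ (B ^ k)) ^ e \<gamma> k)"
      by (rule prod_lessThan_mult[where f = "\<lambda>k. (z ^ (B ^ k)) ^ e \<gamma> k"])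
    finally show ?thesis .
  qed
  then have "geval n s G q = (\<Sum>\<gamma>\<in>S. G \<gamma> * (\<Prod>k<s * m. (z ^ (B ^ k)) ^ e \<gamma> k))"
    by (simp add: geval_def S_def)
  then show ?thesis using z by metis
qed

section \<open>Linear algebra\<close>

text \<open>The square matrix whose rows are the given points, with the last one repeated, is singular;
  a kernel vector gives the hyperplane.\<close>

lemma ex_linear_form_vanishing:
  fixes p :: "nat \<Rightarrow> nat \<Rightarrow> complex"
  assumes "finite I" and "card I \<le> n" and "1 \<le> n"
  shows "\<exists>a. (\<exists>j\<le>n. a j \<noteq> 0) \<and> (\<forall>i\<in>I. (\<Sum>j\<le>n. a j * p i j) = 0)"
proof -
  define xs where "xs = sorted_list_of_set I"
  have len: "length xs = card I" and set_xs: "set xs = I" using assms(1) by (simp_all add: xs_def)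
  define A :: "complex mat" where "A = mat (Suc n) (Suc n) (\<lambda>(r, j). p (xs ! min r (length xs - 1)) j)"
  have A: "A \<in> carrier_mat (Suc n) (Suc n)" by (simp add: A_def)
  have last: "length xs - 1 < Suc n" "n \<noteq> length xs - 1" "min n (length xs - 1) = length xs - 1"
    using len assms(2,3) by linarith+
  have "row A n = row A (length xs - 1)"
    by (rule eq_vecI) (use last in \<open>auto simp: A_def\<close>)
  then have "det A = 0" using det_identical_rows[OF A last(2) _ last(1)] by simp
  then obtain v where v: "v \<in> carrier_vec (Suc n)" "v \<noteq> 0\<^sub>v (Suc n)" "A *\<^sub>v v = 0\<^sub>v (Suc n)"
    using det_0_iff_vec_prod_zero_field[OF A] by blast
  have "\<exists>j\<le>n. v $ j \<noteq> 0"
  proof (rule ccontr)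
    assume "\<not> (\<exists>j\<le>n. v $ j \<noteq> 0)"
    then have "v = 0\<^sub>v (Suc n)" using v(1) by (intro eq_vecI) auto
    then show False using v(2) by simp
  qed
  moreover have "(\<Sum>j\<le>n. v $ j * p i j) = 0" if i: "i \<in> I" for i
  proof -
    obtain r where r: "r < length xs" "xs ! r = i" using i set_xs by (metis in_set_conv_nth)
    then have "r < Suc n" using len assms(2) by linarith
    then have "(A *\<^sub>v v) $ r = row A r \<bullet> v" using A by simp
    then have "row A r \<bullet> v = 0" using v(3) \<open>r < Suc n\<close> by simp
    moreover have "row A r \<bullet> v = (\<Sum>j<Suc n. p i j * v $ j)"
      using r \<open>r < Suc n\<close> v(1) by (auto simp: scalar_prod_def A_def min_def intro!: sum.cong)
    ultimately show ?thesis by (simp add: lessThan_Suc_atMost mult.commute)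
  qed
  ultimately show ?thesis by (intro exI[of _ "\<lambda>j. v $ j"]) auto
qed

lemma ex_point_nonzero_linear_forms:
  fixes a :: "nat \<Rightarrow> nat \<Rightarrow> complex"
  assumes "\<forall>l<k. \<exists>j\<le>n. a l j \<noteq> 0"
  shows "\<exists>x. \<forall>l<k. (\<Sum>j\<le>n. a l j * x j) \<noteq> 0"
proof -
  define Q where "Q l = (\<Sum>j\<le>n. monom (a l j) j)" for l
  have "coeff (Q l) j = a l j" if "j \<le> n" for l j
    using that by (simp add: Q_def coeff_sum)
  then have "Q l \<noteq> 0" if "l < k" for l using assms that by (metis coeff_0)
  then have "0 \<notin> Q ` {..<k}" by auto
  then obtain z where "\<forall>l<k. poly (Q l) z \<noteq> 0" using ex_common_nonroot[of "Q ` {..<k}"] by auto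
  moreover have "poly (Q l) z = (\<Sum>j\<le>n. a l j * z ^ j)" for l by (simp add: Q_def poly_sum poly_monom)
  ultimately show ?thesis by (intro exI[of _ "\<lambda>j. z ^ j"]) auto
qed

lemma adj_mat_mult_vec_nth:
  assumes A: "A \<in> carrier_mat n n" and b: "b \<in> carrier_vec n" and k: "k < n"
  shows "(adj_mat A *\<^sub>v b) $ k = det (replace_col A b k)"
proof -
  have A': "replace_col A b k \<in> carrier_mat n n" using A by (auto simp: replace_col_def)
  have "mat_delete (replace_col A b k) i k = mat_delete A i k" for i
    using A by (intro eq_matI) (auto simp: mat_delete_def replace_col_def)
  then have "det (replace_col A b k) = (\<Sum>i<n. b $ i * cofactor A i k)"
    unfolding laplace_expansion_column[OF A' k] using A k
    by (intro sum.cong) (simp_all add: replace_col_def cofactor_def)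
  also have "\<dots> = (adj_mat A *\<^sub>v b) $ k"
    using A b k by (auto simp: adj_mat_def mult_mat_vec_def scalar_prod_def lessThan_atLeast0 mult.commute
                         intro!: sum.cong)
  finally show ?thesis by (rule sym)
qed

lemma adj_mat_one: "adj_mat (1\<^sub>m n :: 'a::comm_ring_1 mat) = 1\<^sub>m n"
proof -
  have "(1::'a) \<cdot>\<^sub>m 1\<^sub>m n = 1\<^sub>m n" by (rule eq_matI) auto
  then show ?thesis using adj_mat[of "1\<^sub>m n :: 'a mat" n] by simp
qed

definition points_mat :: "nat \<Rightarrow> (nat \<Rightarrow> nat \<Rightarrow> 'a) \<Rightarrow> 'a mat" where
  "points_mat n p = mat (Suc n) (Suc n) (\<lambda>(j, i). p i j)"

lemma points_mat_carrier: "points_mat n p \<in> carrier_mat (Suc n) (Suc n)"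
  by (simp add: points_mat_def)

lemma map_points_mat: "map_mat h (points_mat n p) = points_mat n (\<lambda>i j. h (p i j))"
  by (rule eq_matI) (auto simp: points_mat_def)

lemma adj_points_mat_solves:
  fixes p :: "nat \<Rightarrow> nat \<Rightarrow> 'a::comm_ring_1"
  assumes "j \<le> n"
  shows "(\<Sum>i\<le>n. (adj_mat (points_mat n p) *\<^sub>v vec (Suc n) y) $ i * p i j) = det (points_mat n p) * y j"
proof -
  define M where "M = points_mat n p"
  define u where "u = adj_mat M *\<^sub>v vec (Suc n) y"
  have M: "M \<in> carrier_mat (Suc n) (Suc n)" by (simp add: M_def points_mat_carrier)
  have adj: "adj_mat M \<in> carrier_mat (Suc n) (Suc n)" by (rule adj_mat(1)[OF M])
  have j: "j < Suc n" using assms by simp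
  have "M *\<^sub>v u = (M * adj_mat M) *\<^sub>v vec (Suc n) y" unfolding u_def using M adj by simp
  also have "\<dots> = (det M \<cdot>\<^sub>m 1\<^sub>m (Suc n)) *\<^sub>v vec (Suc n) y" using adj_mat(2)[OF M] by simp
  finally have "(M *\<^sub>v u) $ j = (\<Sum>i\<in>{0..<Suc n}. (det M \<cdot>\<^sub>m 1\<^sub>m (Suc n)) $$ (j, i) * vec (Suc n) y $ i)"
    using j by (simp add: mult_mat_vec_def scalar_prod_def row_def)
  also have "\<dots> = (\<Sum>i\<in>{0..<Suc n}. (if i = j then det M * y j else 0))"
    by (rule sum.cong[OF refl]) (use j in auto)
  also have "\<dots> = det M * y j" using j by simp
  finally have "(M *\<^sub>v u) $ j = det M * y j" .
  moreover have "(M *\<^sub>v u) $ j = (\<Sum>i\<le>n. u $ i * p i j)"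
  proof -
    have "dim_vec u = Suc n" using adj by (simp add: u_def)
    then have "(M *\<^sub>v u) $ j = (\<Sum>i<Suc n. p i j * u $ i)"
      using M j by (auto simp: M_def points_mat_def scalar_prod_def intro!: sum.cong)
    then show ?thesis by (simp add: lessThan_Suc_atMost mult.commute)
  qed
  ultimately show ?thesis by (simp add: u_def M_def)
qed

section \<open>Sufficiency of the bounds\<close>

lemma ex_product_of_hyperplanes:
  fixes p :: "nat \<Rightarrow> nat \<Rightarrow> complex"
  assumes "1 \<le> n" and "\<forall>k<d. finite (S k) \<and> card (S k) \<le> n"
  shows "\<exists>c. homog_form n d c \<and> (\<exists>\<alpha>. c \<alpha> \<noteq> 0) \<and>
             (\<forall>i. mult_ge n d c (p i) (card {k. k < d \<and> i \<in> S k}))"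
proof -
  have "\<forall>k. \<exists>a. k < d \<longrightarrow> (\<exists>j\<le>n. a j \<noteq> 0) \<and> (\<forall>i\<in>S k. (\<Sum>j\<le>n. a j * p i j) = 0)"
  proof
    fix k
    show "\<exists>a. k < d \<longrightarrow> (\<exists>j\<le>n. a j \<noteq> 0) \<and> (\<forall>i\<in>S k. (\<Sum>j\<le>n. a j * p i j) = 0)"
      using ex_linear_form_vanishing[OF _ _ assms(1), of "S k" p] assms(2) by (cases "k < d") simp_all
  qed
  then obtain a where a: "\<forall>k<d. (\<exists>j\<le>n. a k j \<noteq> 0) \<and> (\<forall>i\<in>S k. (\<Sum>j\<le>n. a k j * p i j) = 0)"
    by (rule choice[THEN exE]) blast
  obtain x where "\<forall>l<d. (\<Sum>j\<le>n. a l j * x j) \<noteq> 0"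
    using ex_point_nonzero_linear_forms[of d n a] a by blast
  then have "deriv_eval n d (prod_linear n a d) (\<lambda>_. 0) x \<noteq> 0"
    by (simp add: deriv_eval_prod_linear)
  then have "\<exists>\<alpha>. prod_linear n a d \<alpha> \<noteq> 0"
    unfolding deriv_eval_def by (metis (no_types, lifting) mult_eq_0_iff sum.neutral)
  moreover have "mult_ge n d (prod_linear n a d) (p i) (card {k. k < d \<and> i \<in> S k})" for i
  proof -
    have "card {k. k < d \<and> i \<in> S k} \<le> card {l. l < d \<and> (\<Sum>j\<le>n. a l j * p i j) = 0}"
      by (rule card_mono) (use a in auto)
    then show ?thesis using mult_ge_prod_linear mult_ge_mono by blast
  qed
  ultimately show ?thesis using homog_form_prod_linear by blast
qed

text \<open>Lay out the multiplicities consecutively on \<open>0, 1, \<dots>, \<Sum> m\<^sub>i - 1 < n d\<close> and assign the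
  position \<open>r\<close> to the hyperplane \<open>r mod d\<close>. As \<open>m\<^sub>i \<le> d\<close>, point \<open>i\<close> is assigned to \<open>m\<^sub>i\<close>
  distinct hyperplanes, and each hyperplane receives at most \<open>n\<close> positions.\<close>

definition cyclic_assignment :: "nat \<Rightarrow> (nat \<Rightarrow> nat) \<Rightarrow> nat \<Rightarrow> nat \<Rightarrow> nat set" where
  "cyclic_assignment d m s k =
     {i. i < s \<and> (\<exists>r\<in>{sum m {..<i}..<sum m {..<i} + m i}. r mod d = k)}"

lemma sum_lessThan_add_le:
  fixes m :: "nat \<Rightarrow> nat"
  assumes "i < i'"
  shows "sum m {..<i} + m i \<le> sum m {..<i'}"
  using sum_mono2[of "{..<i'}" "{..<Suc i}" m] assms by simp

lemma eq_if_mod_eq_interval: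
  fixes r r' d :: nat
  assumes "r mod d = r' mod d" "r \<le> r'" "r' < r + d"
  shows "r = r'"
proof -
  have "d dvd r' - r" using assms(1,2) by (metis mod_eq_dvd_iff_nat)
  moreover have "r' - r < d" using assms(2,3) by linarith
  ultimately show ?thesis using assms(2) by (metis dvd_imp_le le_antisym diff_is_0_eq neq0_conv not_less)
qed

lemma le_card_cyclic_assignment:
  assumes "m i \<le> d" and "i < s"
  shows "m i \<le> card {k. k < d \<and> i \<in> cyclic_assignment d m s k}"
proof (cases "d = 0")
  case False
  define P where "P = sum m {..<i}"
  have "inj_on (\<lambda>r. r mod d) {P..<P + m i}"
  proof (rule inj_onI)
    fix r r' assume r: "r \<in> {P..<P + m i}" "r' \<in> {P..<P + m i}" "r mod d = r' mod d"
    show "r = r'"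
    proof (cases "r \<le> r'")
      case True
      then show ?thesis using eq_if_mod_eq_interval[OF r(3) True] r(1,2) assms(1) by simp
    next
      case False
      then show ?thesis using eq_if_mod_eq_interval[OF r(3)[symmetric]] r(1,2) assms(1) by simp
    qed
  qed
  then have "m i = card ((\<lambda>r. r mod d) ` {P..<P + m i})" by (simp add: card_image)
  also have "\<dots> \<le> card {k. k < d \<and> i \<in> cyclic_assignment d m s k}"
    using assms(2) False by (intro card_mono) (auto simp: cyclic_assignment_def P_def)
  finally show ?thesis .
qed (use assms in simp)

lemma card_cyclic_assignment_le:
  fixes m :: "nat \<Rightarrow> nat"
  assumes "(\<Sum>i<s. m i) \<le> n * d" and "k < d"
  shows "card (cyclic_assignment d m s k) \<le> n"
proof -
  define S where "S = cyclic_assignment d m s k"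
  define f where "f i = (SOME r. r \<in> {sum m {..<i}..<sum m {..<i} + m i} \<and> r mod d = k)" for i
  have f: "f i \<in> {sum m {..<i}..<sum m {..<i} + m i} \<and> f i mod d = k" if "i \<in> S" for i
  proof -
    have "\<exists>r. r \<in> {sum m {..<i}..<sum m {..<i} + m i} \<and> r mod d = k"
      using that by (auto simp: S_def cyclic_assignment_def)
    then show ?thesis unfolding f_def by (rule someI_ex)
  qed
  have "inj_on f S"
  proof (rule inj_onI)
    fix i i' assume i: "i \<in> S" "i' \<in> S" "f i = f i'"
    show "i = i'"
    proof (rule linorder_cases)
      assume "i < i'"
      then show ?thesis using sum_lessThan_add_le[of i i' m] f[OF i(1)] f[OF i(2)] i(3) by simp
    next
      assume "i' < i"
      then show ?thesis using sum_lessThan_add_le[of i' i m] f[OF i(1)] f[OF i(2)] i(3) by simp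
    qed
  qed
  moreover have "f ` S \<subseteq> (\<lambda>q. q * d + k) ` {..<n}"
  proof
    fix y assume "y \<in> f ` S"
    then obtain i where i: "i \<in> S" and y: "y = f i" by blast
    then have "i < s" by (simp add: S_def cyclic_assignment_def)
    then have "sum m {..<i} + m i \<le> n * d"
      using sum_lessThan_add_le[of i s m] assms(1) by simp
    then have "y div d < n" using f[OF i] y by (intro less_mult_imp_div_less) simp
    moreover have "y = (y div d) * d + k" using f[OF i] y by (metis div_mult_mod_eq)
    ultimately show "y \<in> (\<lambda>q. q * d + k) ` {..<n}" by blast
  qed
  ultimately have "card S \<le> card ((\<lambda>q. q * d + k) ` {..<n})"
    by (metis card_inj_on_le finite_imageI finite_lessThan)
  also have "\<dots> \<le> n" using card_image_le[of "{..<n}"] by simp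
  finally show ?thesis by (simp add: S_def)
qed

text \<open>The construction works for every configuration, so the general position condition is
  the trivial polynomial \<open>1\<close>.\<close>

lemma L_nonempty_if_bounded:
  assumes "1 \<le> n" and "\<forall>i<s. m i \<le> d" and "(\<Sum>i<s. m i) \<le> n * d"
  shows "L_nonempty n d s m"
proof -
  have "\<exists>c. homog_form n d c \<and> (\<exists>\<alpha>. c \<alpha> \<noteq> 0) \<and> (\<forall>i<s. mult_ge n d c (p i) (m i))" for p
  proof -
    have "\<forall>k<d. finite (cyclic_assignment d m s k) \<and> card (cyclic_assignment d m s k) \<le> n"
      using card_cyclic_assignment_le[OF assms(3)] by (simp add: cyclic_assignment_def)
    then obtain c where c: "homog_form n d c" "\<exists>\<alpha>. c \<alpha> \<noteq> 0"
      and mult: "\<forall>i. mult_ge n d c (p i) (card {k. k < d \<and> i \<in> cyclic_assignment d m s k})"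
      using ex_product_of_hyperplanes[OF assms(1), of d _ p] by blast
    have "mult_ge n d c (p i) (m i)" if "i < s" for i
      using mult_ge_mono[OF mult[rule_format, of i] le_card_cyclic_assignment[of m i d s]] assms(2) that
      by simp
    then show ?thesis using c by blast
  qed
  moreover define G :: "(nat \<Rightarrow> nat \<Rightarrow> nat) \<Rightarrow> complex" where "G \<gamma> = (if \<gamma> = (\<lambda>i j. 0) then 1 else 0)" for \<gamma>
  moreover have "{\<gamma>. G \<gamma> \<noteq> 0} = {\<lambda>i j. 0}" by (auto simp: G_def)
  ultimately show ?thesis unfolding L_nonempty_def for_general_points_def
    by (intro exI[of _ G]) (auto simp: G_def)
qed

section \<open>Necessity of the bounds for at most \<open>n + 2\<close> points\<close>

definition last_point_vec :: "nat \<Rightarrow> (nat \<Rightarrow> nat \<Rightarrow> 'a) \<Rightarrow> 'a vec" where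
  "last_point_vec n p = vec (Suc n) (\<lambda>j. p (Suc n) j)"

lemma last_point_vec_carrier: "last_point_vec n p \<in> carrier_vec (Suc n)"
  by (simp add: last_point_vec_def)

lemma map_last_point_vec: "map_vec h (last_point_vec n p) = last_point_vec n (\<lambda>i j. h (p i j))"
  by (rule eq_vecI) (auto simp: last_point_vec_def)

lemma map_replace_col:
  assumes "A \<in> carrier_mat k k" "b \<in> carrier_vec k"
  shows "map_mat h (replace_col A b i) = replace_col (map_mat h A) (map_vec h b) i"
  using assms by (intro eq_matI) (auto simp: replace_col_def)

definition standard_frame :: "nat \<Rightarrow> nat \<Rightarrow> nat \<Rightarrow> complex" where
  "standard_frame n i j = (if i \<le> n then (if j = i then 1 else 0) else 1)"

lemma points_mat_standard_frame: "points_mat n (standard_frame n) = 1\<^sub>m (Suc n)"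
  by (rule eq_matI) (auto simp: points_mat_def standard_frame_def)

lemma det_replace_col_standard_frame:
  assumes "i \<le> n"
  shows "det (replace_col (points_mat n (standard_frame n)) (last_point_vec n (standard_frame n)) i) = 1"
proof -
  have "last_point_vec n (standard_frame n) = vec (Suc n) (\<lambda>_. 1)"
    by (rule eq_vecI) (auto simp: last_point_vec_def standard_frame_def)
  then show ?thesis
    using adj_mat_mult_vec_nth[of "1\<^sub>m (Suc n)" "Suc n" "vec (Suc n) (\<lambda>_. 1)" i] assms
    by (simp add: points_mat_standard_frame adj_mat_one)
qed

text \<open>Each condition is polynomial in the coordinates. Along the line from the standard frame to
  a point where \<open>G \<noteq> 0\<close> they become nonzero univariate polynomials, which have a common
  non-root.\<close>

lemma ex_general_frame:
  fixes G :: "(nat \<Rightarrow> nat \<Rightarrow> nat) \<Rightarrow> complex"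
  assumes "finite {\<gamma>. G \<gamma> \<noteq> 0}" and "{\<gamma>. G \<gamma> \<noteq> 0} \<noteq> {}"
    and "\<forall>\<gamma>. G \<gamma> \<noteq> 0 \<longrightarrow> (\<forall>i j. \<gamma> i j \<noteq> 0 \<longrightarrow> i < s \<and> j \<le> n)"
  shows "\<exists>p. valid_config n s p \<and> geval n s G p \<noteq> 0 \<and> det (points_mat n p) \<noteq> 0 \<and>
             (\<forall>i\<le>n. det (replace_col (points_mat n p) (last_point_vec n p) i) \<noteq> 0)"
proof -
  obtain q where q: "geval n s G q \<noteq> 0" using geval_nonzero_at[OF assms] by blast
  define L where "L i j = [:standard_frame n i j, q i j - standard_frame n i j:]" for i j
  define P where "P t = (\<lambda>i j. poly (L i j) t)" for t
  have P0: "P 0 = standard_frame n" and P1: "P 1 = q" by (simp_all add: P_def L_def fun_eq_iff)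
  have eval_hom: "comm_ring_hom (\<lambda>f::complex poly. poly f t)" for t by unfold_locales auto
  define Q\<^sub>G where "Q\<^sub>G = (\<Sum>\<gamma> | G \<gamma> \<noteq> 0. smult (G \<gamma>) (\<Prod>i<s. \<Prod>j\<le>n. L i j ^ \<gamma> i j))"
  define Q\<^sub>D where "Q\<^sub>D = det (points_mat n L)"
  define Q\<^sub>\<mu> where "Q\<^sub>\<mu> i = det (replace_col (points_mat n L) (last_point_vec n L) i)" for i
  define Q\<^sub>p where "Q\<^sub>p i = L i (if i \<le> n then i else 0)" for i
  have poly_Q\<^sub>G: "poly Q\<^sub>G t = geval n s G (P t)" for t
    unfolding Q\<^sub>G_def geval_def by (simp add: poly_sum poly_prod P_def)
  have poly_Q\<^sub>D: "poly Q\<^sub>D t = det (points_mat n (P t))" for t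
    using comm_ring_hom.hom_det[OF eval_hom, where A = "points_mat n L"]
    unfolding Q\<^sub>D_def map_points_mat P_def by simp
  have poly_Q\<^sub>\<mu>: "poly (Q\<^sub>\<mu> i) t = det (replace_col (points_mat n (P t)) (last_point_vec n (P t)) i)" for t i
    using comm_ring_hom.hom_det[OF eval_hom, where A = "replace_col (points_mat n L) (last_point_vec n L) i"]
    unfolding Q\<^sub>\<mu>_def map_replace_col[OF points_mat_carrier last_point_vec_carrier]
      map_points_mat map_last_point_vec P_def by simp
  define \<Q> where "\<Q> = {Q\<^sub>G, Q\<^sub>D} \<union> Q\<^sub>\<mu> ` {..n} \<union> Q\<^sub>p ` {..<s}"
  have "Q\<^sub>G \<noteq> 0" using q poly_Q\<^sub>G[of 1] by (auto simp: P1)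
  moreover have "Q\<^sub>D \<noteq> 0" using poly_Q\<^sub>D[of 0] by (auto simp: P0 points_mat_standard_frame)
  moreover have "Q\<^sub>\<mu> i \<noteq> 0" if "i \<le> n" for i
    using poly_Q\<^sub>\<mu>[of i 0] that by (auto simp: P0 det_replace_col_standard_frame)
  moreover have "Q\<^sub>p i \<noteq> 0" for i by (simp add: Q\<^sub>p_def L_def standard_frame_def)
  ultimately have "0 \<notin> \<Q>" unfolding \<Q>_def by auto
  then obtain t where t: "\<forall>Q\<in>\<Q>. poly Q t \<noteq> 0" using ex_common_nonroot[of \<Q>] by (auto simp: \<Q>_def)
  have "valid_config n s (P t)"
    unfolding valid_config_def
  proof (intro allI impI)
    fix i assume "i < s"
    then have "poly (Q\<^sub>p i) t \<noteq> 0" using t by (auto simp: \<Q>_def)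
    then show "\<exists>j\<le>n. P t i j \<noteq> 0" by (intro exI[of _ "if i \<le> n then i else 0"]) (simp add: Q\<^sub>p_def P_def)
  qed
  moreover have "geval n s G (P t) \<noteq> 0" "det (points_mat n (P t)) \<noteq> 0"
    using t poly_Q\<^sub>G poly_Q\<^sub>D by (auto simp: \<Q>_def)
  moreover have "\<forall>i\<le>n. det (replace_col (points_mat n (P t)) (last_point_vec n (P t)) i) \<noteq> 0"
    using t by (simp add: \<Q>_def flip: poly_Q\<^sub>\<mu>)
  ultimately show ?thesis by blast
qed

definition lagrange_curve :: "nat \<Rightarrow> (nat \<Rightarrow> complex) \<Rightarrow> (nat \<Rightarrow> nat \<Rightarrow> complex) \<Rightarrow> nat \<Rightarrow> complex poly"
  where "lagrange_curve n a w j = (\<Sum>i\<le>n. smult (w i j) (\<Prod>k\<in>{..n}-{i}. [:-a k, 1:]))"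

lemma poly_lagrange_curve:
  "poly (lagrange_curve n a w j) t = (\<Sum>i\<le>n. w i j * (\<Prod>k\<in>{..n}-{i}. t - a k))"
  by (simp add: lagrange_curve_def poly_sum poly_prod)

lemma degree_lagrange_curve: "degree (lagrange_curve n a w j) \<le> n"
  unfolding lagrange_curve_def
proof (rule degree_sum_le)
  fix i assume "i \<in> {..n}"
  have "degree (\<Prod>k\<in>{..n}-{i}. [:-a k, 1:]) \<le> (\<Sum>k\<in>{..n}-{i}. degree [:-a k, 1:])"
    using degree_prod_sum_le[of "{..n}-{i}" "\<lambda>k. [:-a k, 1:]"] by (simp add: o_def)
  also have "\<dots> = n" using \<open>i \<in> {..n}\<close> by simp
  finally show "degree (smult (w i j) (\<Prod>k\<in>{..n}-{i}. [:-a k, 1:])) \<le> n"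
    using degree_smult_le le_trans by blast
qed simp

lemma poly_lagrange_curve_node:
  assumes "i \<le> n"
  shows "poly (lagrange_curve n a w j) (a i) = w i j * (\<Prod>k\<in>{..n}-{i}. a i - a k)"
proof -
  have "w i' j * (\<Prod>k\<in>{..n}-{i'}. a i - a k) = 0" if "i' \<in> {..n} - {i}" for i'
    using that assms by (auto intro!: prod_zero bexI[of _ i])
  then show ?thesis unfolding poly_lagrange_curve
    by (subst sum.mono_neutral_right[of "{..n}" "{i}"]) (use assms in auto)
qed

lemma poly_lagrange_curve_factor:
  assumes "\<forall>i\<le>n. w i j = (t - a i) * v i j"
  shows "poly (lagrange_curve n a w j) t = (\<Prod>k\<le>n. t - a k) * (\<Sum>i\<le>n. v i j)"
proof -
  have "w i j * (\<Prod>k\<in>{..n}-{i}. t - a k) = (\<Prod>k\<le>n. t - a k) * v i j" if "i \<le> n" for i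
  proof -
    have "(\<Prod>k\<le>n. t - a k) = (t - a i) * (\<Prod>k\<in>{..n}-{i}. t - a k)" using that by (simp add: prod.remove)
    then show ?thesis using assms that by simp
  qed
  then show ?thesis unfolding poly_lagrange_curve sum_distrib_left by (intro sum.cong) auto
qed

text \<open>The conditions on \<open>b\<close> hold at \<open>b\<^sub>i = i + 2\<close>, and at \<open>b\<^sub>i = e\<^sub>i / \<mu>\<^sub>i\<close> the point
  \<open>\<Sum>\<^sub>i \<mu>\<^sub>i b\<^sub>i p\<^sub>i = D x\<close> lies outside \<open>F = 0\<close>; so everything holds at a common non-root on the
  line through these two parameter vectors.\<close>

lemma ex_curve_parameters:
  fixes p :: "nat \<Rightarrow> nat \<Rightarrow> complex"
  assumes "\<forall>i\<le>n. \<mu> i \<noteq> 0" and "D \<noteq> 0"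
    and "\<forall>j\<le>n. (\<Sum>i\<le>n. e i * p i j) = D * x j"
    and "deriv_eval n d c (\<lambda>_. 0) x \<noteq> 0"
  shows "\<exists>b. (\<forall>i\<le>n. b i \<noteq> 0 \<and> b i \<noteq> 1) \<and> inj_on b {..n} \<and>
             deriv_eval n d c (\<lambda>_. 0) (\<lambda>j. \<Sum>i\<le>n. \<mu> i * b i * p i j) \<noteq> 0"
proof -
  define b\<^sub>0 where "b\<^sub>0 i = e i / \<mu> i" for i
  define b\<^sub>1 :: "nat \<Rightarrow> complex" where "b\<^sub>1 i = of_nat (i + 2)" for i
  define B where "B i = [:b\<^sub>0 i, b\<^sub>1 i - b\<^sub>0 i:]" for i
  have poly_B0: "poly (B i) 0 = b\<^sub>0 i" and poly_B1: "poly (B i) 1 = b\<^sub>1 i" for i by (simp_all add: B_def)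
  define Q where "Q = restrict_curve n d c (\<lambda>j. \<Sum>i\<le>n. smult (\<mu> i * p i j) (B i))"
  have poly_Q: "poly Q t = deriv_eval n d c (\<lambda>_. 0) (\<lambda>j. \<Sum>i\<le>n. \<mu> i * poly (B i) t * p i j)" for t
    unfolding Q_def poly_restrict_curve by (simp add: poly_sum algebra_simps)
  define \<Q> where "\<Q> = {Q} \<union> (\<lambda>(i, i'). B i - B i') ` ({..n} \<times> {..n} - Id) \<union> B ` {..n} \<union> (\<lambda>i. B i - 1) ` {..n}"
  have "poly Q 0 = deriv_eval n d c (\<lambda>_. 0) (\<lambda>j. D * x j)"
    unfolding poly_Q poly_B0 using assms(1,3) by (intro deriv_eval_cong) (simp add: b\<^sub>0_def)
  then have "Q \<noteq> 0" using assms(2,4) by (auto simp: deriv_eval_mult)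
  moreover have "i = i'" if "B i = B i'" for i i'
  proof -
    have "b\<^sub>1 i = b\<^sub>1 i'" using that poly_B1 by metis
    then show ?thesis unfolding b\<^sub>1_def by (simp only: of_nat_eq_iff add_right_cancel)
  qed
  moreover have "B i \<noteq> 0" "B i \<noteq> 1" for i
  proof -
    have "b\<^sub>1 i \<noteq> 0" "b\<^sub>1 i \<noteq> 1" unfolding b\<^sub>1_def by (simp_all only: of_nat_eq_0_iff of_nat_eq_1_iff)
    then show "B i \<noteq> 0" "B i \<noteq> 1" using poly_B1[of i] by auto
  qed
  ultimately have "0 \<notin> \<Q>" unfolding \<Q>_def by auto
  moreover have "finite \<Q>" by (simp add: \<Q>_def)
  ultimately obtain t where t: "\<forall>P\<in>\<Q>. poly P t \<noteq> 0" using ex_common_nonroot by blast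
  show ?thesis
  proof (intro exI conjI allI impI)
    fix i assume "i \<le> n"
    then have "B i \<in> \<Q>" "B i - 1 \<in> \<Q>" by (auto simp: \<Q>_def)
    then show "poly (B i) t \<noteq> 0" "poly (B i) t \<noteq> 1" using t by auto
  next
    show "inj_on (\<lambda>i. poly (B i) t) {..n}"
    proof (rule inj_onI, rule ccontr)
      fix i i' assume "i \<in> {..n}" "i' \<in> {..n}" "poly (B i) t = poly (B i') t" "i \<noteq> i'"
      then have "B i - B i' \<in> \<Q>" "poly (B i - B i') t = 0" by (auto simp: \<Q>_def)
      then show False using t by blast
    qed
  next
    show "deriv_eval n d c (\<lambda>_. 0) (\<lambda>j. \<Sum>i\<le>n. \<mu> i * poly (B i) t * p i j) \<noteq> 0"
      using t poly_Q by (auto simp: \<Q>_def)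
  qed
qed

text \<open>The curve through \<open>p\<^sub>0, \<dots>, p\<^sub>n\<^sub>+\<^sub>1\<close> with \<open>\<gamma>(a\<^sub>i) \<sim> p\<^sub>i\<close>, \<open>\<gamma>(1) \<sim> p\<^sub>n\<^sub>+\<^sub>1\<close> and
  \<open>\<gamma>(0) \<sim> \<Sum>\<^sub>i \<mu>\<^sub>i b\<^sub>i p\<^sub>i\<close>, where \<open>a\<^sub>i = 1 / (1 - b\<^sub>i)\<close>, is not contained in \<open>F = 0\<close>.\<close>

lemma sum_mult_le_on_frame:
  fixes p :: "nat \<Rightarrow> nat \<Rightarrow> complex" and \<mu> b :: "nat \<Rightarrow> complex"
  assumes c: "homog_form n d c"
    and last_point: "\<forall>j\<le>n. (\<Sum>i\<le>n. \<mu> i * p i j) = D * p (Suc n) j"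
    and b: "\<forall>i\<le>n. b i \<noteq> 0 \<and> b i \<noteq> 1" "inj_on b {..n}"
    and F_nonzero: "deriv_eval n d c (\<lambda>_. 0) (\<lambda>j. \<Sum>i\<le>n. \<mu> i * b i * p i j) \<noteq> 0"
    and mult: "\<forall>i\<le>Suc n. mult_ge n d c (p i) (m i)"
  shows "(\<Sum>i\<le>Suc n. m i) \<le> n * d"
proof -
  define a where "a i = 1 / (1 - b i)" for i
  have a: "a i \<noteq> 0" "a i \<noteq> 1" "1 - a i = - b i * a i" if "i \<le> n" for i
    using b(1) that by (auto simp: a_def field_simps)
  have "inj_on a {..n}"
    using b(1) inj_onD[OF b(2)] by (intro inj_onI) (auto simp: a_def field_simps)
  define w where "w i j = (1 - a i) * (\<mu> i * p i j)" for i j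
  define \<gamma> where "\<gamma> = lagrange_curve n a w"
  define t where "t i = (if i \<le> n then a i else 1)" for i
  define \<kappa> where "\<kappa> i = (if i \<le> n then (1 - a i) * \<mu> i * (\<Prod>k\<in>{..n}-{i}. a i - a k)
                                else (\<Prod>k\<le>n. 1 - a k) * D)" for i
  have "poly (\<gamma> j) 0 = (\<Prod>k\<le>n. 0 - a k) * (\<Sum>i\<le>n. \<mu> i * b i * p i j)" for j
    unfolding \<gamma>_def using a(3) by (intro poly_lagrange_curve_factor) (simp add: w_def)
  then have "poly (restrict_curve n d c \<gamma>) 0 \<noteq> 0"
    using F_nonzero a(1) by (simp add: poly_restrict_curve deriv_eval_mult)
  then have "restrict_curve n d c \<gamma> \<noteq> 0" by auto
  moreover have "inj_on t {..Suc n}"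
    using \<open>inj_on a {..n}\<close> a(2) by (auto simp: t_def inj_on_def le_Suc_eq)
  moreover have "poly (\<gamma> j) (t i) = \<kappa> i * p i j" if "i \<le> Suc n" "j \<le> n" for i j
  proof (cases "i \<le> n")
    case True
    then show ?thesis using \<open>inj_on a {..n}\<close>
      by (simp add: \<gamma>_def t_def \<kappa>_def poly_lagrange_curve_node w_def)
  next
    case False
    have "poly (\<gamma> j) 1 = (\<Prod>k\<le>n. 1 - a k) * (\<Sum>i\<le>n. \<mu> i * p i j)"
      unfolding \<gamma>_def by (intro poly_lagrange_curve_factor) (simp add: w_def)
    then show ?thesis using False that last_point by (simp add: t_def \<kappa>_def le_Suc_eq)
  qed
  ultimately have "(\<Sum>i\<le>Suc n. m i) \<le> degree (restrict_curve n d c \<gamma>)"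
    using mult by (intro sum_mult_le_degree_restrict_curve[OF c]) auto
  also have "\<dots> \<le> d * n" using degree_lagrange_curve by (intro degree_restrict_curve) (simp add: \<gamma>_def)
  finally show ?thesis by (simp add: mult.commute)
qed

lemma bounded_if_L_nonempty:
  assumes "s \<le> n + 2" and "L_nonempty n d s m"
  shows "(\<forall>i<s. m i \<le> d) \<and> (\<Sum>i<s. m i) \<le> n * d"
proof -
  obtain G where G: "finite {\<gamma>. G \<gamma> \<noteq> 0}" "{\<gamma>. G \<gamma> \<noteq> 0} \<noteq> {}"
      "\<forall>\<gamma>. G \<gamma> \<noteq> 0 \<longrightarrow> (\<forall>i j. \<gamma> i j \<noteq> 0 \<longrightarrow> i < s \<and> j \<le> n)"
    and L: "\<forall>p. valid_config n s p \<longrightarrow> geval n s G p \<noteq> 0 \<longrightarrow>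
       (\<exists>c. homog_form n d c \<and> (\<exists>\<alpha>. c \<alpha> \<noteq> 0) \<and> (\<forall>i<s. mult_ge n d c (p i) (m i)))"
    using assms(2) unfolding L_nonempty_def for_general_points_def by (elim exE conjE) (rule that)
  obtain p where "valid_config n s p" "geval n s G p \<noteq> 0" and D: "det (points_mat n p) \<noteq> 0"
    and \<mu>: "\<forall>i\<le>n. det (replace_col (points_mat n p) (last_point_vec n p) i) \<noteq> 0"
    using ex_general_frame[OF G] by blast
  with L obtain c \<alpha> where c: "homog_form n d c" "c \<alpha> \<noteq> 0" and mult: "\<forall>i<s. mult_ge n d c (p i) (m i)"
    by blast
  define M where "M = points_mat n p"
  define \<mu> where "\<mu> i = det (replace_col M (last_point_vec n p) i)" for i
  have "\<mu> i = (adj_mat M *\<^sub>v vec (Suc n) (p (Suc n))) $ i" if "i \<le> n" for i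
    using adj_mat_mult_vec_nth[OF points_mat_carrier last_point_vec_carrier, of i n p] that
    by (simp add: \<mu>_def M_def last_point_vec_def)
  then have last_point: "\<forall>j\<le>n. (\<Sum>i\<le>n. \<mu> i * p i j) = det M * p (Suc n) j"
    using adj_points_mat_solves[of _ n p] by (simp add: M_def)
  obtain x where x: "deriv_eval n d c (\<lambda>_. 0) x \<noteq> 0" using homog_form_nonzero_at[OF c] by blast
  have "\<forall>j\<le>n. (\<Sum>i\<le>n. (adj_mat M *\<^sub>v vec (Suc n) x) $ i * p i j) = det M * x j"
    using adj_points_mat_solves[of _ n p] by (simp add: M_def)
  moreover have "\<forall>i\<le>n. \<mu> i \<noteq> 0" "det M \<noteq> 0" using \<mu> D by (simp_all add: \<mu>_def M_def)
  ultimately obtain b where b: "\<forall>i\<le>n. b i \<noteq> 0 \<and> b i \<noteq> 1" "inj_on b {..n}"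
    and F_nonzero: "deriv_eval n d c (\<lambda>_. 0) (\<lambda>j. \<Sum>i\<le>n. \<mu> i * b i * p i j) \<noteq> 0"
    using ex_curve_parameters[OF _ _ _ x] by blast
  define m' where "m' i = (if i < s then m i else 0)" for i
  have "(\<Sum>i<s. m i) = (\<Sum>i\<le>Suc n. m' i)"
    using assms(1) by (intro sum.mono_neutral_cong_left) (auto simp: m'_def)
  also have "\<dots> \<le> n * d"
    using mult by (intro sum_mult_le_on_frame[OF c(1) last_point b F_nonzero]) (auto simp: m'_def mult_ge_def)
  finally show ?thesis using mult mult_ge_le_degree[OF c] by blast
qed

theorem lemma2p2:
  fixes n d s :: nat and m :: "nat \<Rightarrow> nat"
  assumes "n \<ge> 1" and "s \<ge> 1"
  shows "(((\<forall>i<s. m i \<le> d) \<and> (\<Sum>i<s. m i) \<le> n * d) \<longrightarrow> L_nonempty n d s m) \<and>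
         (s \<le> n + 2 \<longrightarrow>
            (L_nonempty n d s m \<longleftrightarrow> ((\<forall>i<s. m i \<le> d) \<and> (\<Sum>i<s. m i) \<le> n * d)))"
  using L_nonempty_if_bounded[OF assms(1)] bounded_if_L_nonempty by blast

end
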